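(* Any Turing recognizable language can be weakly verified by a rational-valued 2ADfA with arbitrary bounded error $\epsilon$. Moreover, the protocol achieves perfect completeness.
   Context: An affine state of an $m$-state affine register is a vector $v\in\mathbb{R}^m$ whose entries sum to $1$; affine operators are real matrices whose columns each sum to $1$; weighting observes basis state $e_j$ with probability $|v_j|/\|v\|_1$ and collapses the register to $e_j$. A 2ADfA is a two-way deterministic finite automaton on the read-only input $¢ w\$$ (left end-marker ¢, right end-marker \$), whose head may move left, right or stay, equipped with finitely many affine registers; at each step, depending on the deterministic state and scanned symbol, each register is either updated by an affine operator or weighted, and then the deterministic state and head move are determined by the state, symbol and weighting outcomes; it halts upon entering an accepting or rejecting state. Rational-valued means all affine operators have rational entries. The 2ADfA is the verifier in an Arthur–Merlin proof system: it communicates with an all-powerful prover through a communication cell and reveals its deterministic states, head moves and weighting outcomes (public coins). Weak verification with error $\epsilon<1/2$ (rational): there is a prover such that every $w\in L$ is accepted with probability at least $1-\epsilon$, and for every $w\notin L$ and every prover, $w$ is accepted with probability at most $\epsilon$ (non-halting allowed). Perfect completeness means every $w\in L$ is accepted with probability $1$. *)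

theory Defs
  imports "HOL-Analysis.Analysis"
begin

text \<open>Deterministic single-tape Turing machine with a two-way infinite tape.
 States are the naturals below tm_nst, tape symbols the naturals below tm_nsym,
 the blank is 0, input letters are encoded injectively by tm_enc into nonblank
 tape symbols.\<close>

record 'a tm =
  tm_nst :: nat
  tm_nsym :: nat
  tm_delta :: "nat \<Rightarrow> nat \<Rightarrow> nat \<times> nat \<times> int"
  tm_start :: nat
  tm_acc :: nat
  tm_rej :: nat
  tm_enc :: "'a \<Rightarrow> nat"

definition wf_tm :: "'a tm \<Rightarrow> bool" where
  "wf_tm M \<longleftrightarrow>
     tm_start M < tm_nst M \<and> tm_acc M < tm_nst M \<and> tm_rej M < tm_nst M \<and>
     tm_acc M \<noteq> tm_rej M \<and> 0 < tm_nsym M \<and>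
     inj (tm_enc M) \<and> (\<forall>a. tm_enc M a < tm_nsym M \<and> tm_enc M a \<noteq> 0) \<and>
     (\<forall>q < tm_nst M. \<forall>s < tm_nsym M.
        fst (tm_delta M q s) < tm_nst M \<and>
        fst (snd (tm_delta M q s)) < tm_nsym M \<and>
        snd (snd (tm_delta M q s)) \<in> {-1, 0, 1})"

type_synonym tm_config = "nat \<times> int \<times> (int \<Rightarrow> nat)"

definition tm_init :: "'a tm \<Rightarrow> 'a list \<Rightarrow> tm_config" where
  "tm_init M w = (tm_start M, 0,
     (\<lambda>i. if 0 \<le> i \<and> i < int (length w) then tm_enc M (w ! nat i) else 0))"

definition tm_step :: "'a tm \<Rightarrow> tm_config \<Rightarrow> tm_config" where
  "tm_step M cfg = (case cfg of (q, h, t) \<Rightarrow>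
     if q = tm_acc M \<or> q = tm_rej M then (q, h, t)
     else (case tm_delta M q (t h) of (q', s', d) \<Rightarrow> (q', h + d, t(h := s'))))"

definition tm_accepts :: "'a tm \<Rightarrow> 'a list \<Rightarrow> bool" where
  "tm_accepts M w \<longleftrightarrow> (\<exists>n. fst ((tm_step M ^^ n) (tm_init M w)) = tm_acc M)"

definition turing_recognizable :: "'a list set \<Rightarrow> bool" where
  "turing_recognizable L \<longleftrightarrow> (\<exists>M :: 'a tm. wf_tm M \<and> (\<forall>w. w \<in> L \<longleftrightarrow> tm_accepts M w))"

datatype 'a tsym = LEnd | REnd | Sym 'a

definition tape :: "'a list \<Rightarrow> nat \<Rightarrow> 'a tsym" where
  "tape w i = (if i = 0 then LEnd else if i \<le> length w then Sym (w ! (i - 1)) else REnd)"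

text \<open>Action on one affine register: apply an affine operator (matrix, entry (i,j)
  in row i column j) or weight (measure) the register.\<close>
datatype reg_op = Apply "nat \<Rightarrow> nat \<Rightarrow> real" | Weigh

text \<open>Deterministic states are naturals below nst; communication symbols are naturals
 below ncom; register r has dimension dims ! r. act q sym c r is the action on register r
 when in state q scanning sym with communication symbol c; trans q sym c os gives the
 next state and head move, where os ! r = Some j is the outcome of weighting register r
 (None if register r was not weighted).\<close>
record 'a adfa =
  nst :: nat
  start :: nat
  accs :: nat
  rejs :: nat
  ncom :: nat
  dims :: "nat list"
  act :: "nat \<Rightarrow> 'a tsym \<Rightarrow> nat \<Rightarrow> nat \<Rightarrow> reg_op"
  trans :: "nat \<Rightarrow> 'a tsym \<Rightarrow> nat \<Rightarrow> nat option list \<Rightarrow> nat \<times> int"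

definition outcomes :: "'a adfa \<Rightarrow> nat \<Rightarrow> 'a tsym \<Rightarrow> nat \<Rightarrow> nat option list set" where
  "outcomes V q s c = {os. length os = length (dims V) \<and>
     (\<forall>r < length (dims V). (case act V q s c r of
         Apply M \<Rightarrow> os ! r = None
       | Weigh \<Rightarrow> (\<exists>j < dims V ! r. os ! r = Some j)))}"

definition wf_adfa :: "'a adfa \<Rightarrow> bool" where
  "wf_adfa V \<longleftrightarrow>
     start V < nst V \<and> accs V < nst V \<and> rejs V < nst V \<and> accs V \<noteq> rejs V \<and>
     0 < ncom V \<and> (\<forall>m \<in> set (dims V). 0 < m) \<and>
     (\<forall>q < nst V. \<forall>s. \<forall>c < ncom V. \<forall>r < length (dims V).
        (case act V q s c r of
           Apply M \<Rightarrow> (\<forall>j < dims V ! r. (\<Sum>i < dims V ! r. M i j) = 1)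
         | Weigh \<Rightarrow> True)) \<and>
     (\<forall>q < nst V. \<forall>s. \<forall>c < ncom V. \<forall>os \<in> outcomes V q s c.
        fst (trans V q s c os) < nst V \<and>
        snd (trans V q s c os) \<in> {-1, 0, 1} \<and>
        (s = LEnd \<longrightarrow> snd (trans V q s c os) \<noteq> -1) \<and>
        (s = REnd \<longrightarrow> snd (trans V q s c os) \<noteq> 1))"

definition rational_valued :: "'a adfa \<Rightarrow> bool" where
  "rational_valued V \<longleftrightarrow>
     (\<forall>q < nst V. \<forall>s. \<forall>c < ncom V. \<forall>r < length (dims V).
        (case act V q s c r of
           Apply M \<Rightarrow> (\<forall>i < dims V ! r. \<forall>j < dims V ! r. M i j \<in> \<rat>)
         | Weigh \<Rightarrow> True))"

definition basis_vec :: "nat \<Rightarrow> nat \<Rightarrow> real list" where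
  "basis_vec m j = map (\<lambda>i. if i = j then 1 else 0) [0..<m]"

definition apply_op :: "(nat \<Rightarrow> nat \<Rightarrow> real) \<Rightarrow> real list \<Rightarrow> real list" where
  "apply_op M v = map (\<lambda>i. \<Sum>j < length v. M i j * v ! j) [0..<length v]"

definition l1norm :: "real list \<Rightarrow> real" where
  "l1norm v = sum_list (map abs v)"

definition outcome_prob ::
  "'a adfa \<Rightarrow> real list list \<Rightarrow> nat option list \<Rightarrow> real" where
  "outcome_prob V regs os =
     (\<Prod>r \<in> {r. r < length (dims V) \<and> os ! r \<noteq> None}.
        \<bar>regs ! r ! the (os ! r)\<bar> / l1norm (regs ! r))"

definition update_regs ::
  "'a adfa \<Rightarrow> nat \<Rightarrow> 'a tsym \<Rightarrow> nat \<Rightarrow> real list list \<Rightarrow> nat option list \<Rightarrow> real list list" where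
  "update_regs V q s c regs os = map (\<lambda>r. case act V q s c r of
        Apply M \<Rightarrow> apply_op M (regs ! r)
      | Weigh \<Rightarrow> basis_vec (dims V ! r) (the (os ! r))) [0..<length (dims V)]"

text \<open>Public history seen by the prover: after each step the new deterministic state,
  the new head position and the weighting outcomes.\<close>
type_synonym history = "(nat \<times> nat \<times> nat option list) list"

text \<open>A prover: given the input and the public history, writes a symbol into the
  communication cell.\<close>
type_synonym 'a prover = "'a list \<Rightarrow> history \<Rightarrow> nat"

definition valid_prover :: "'a adfa \<Rightarrow> 'a prover \<Rightarrow> bool" where
  "valid_prover V P \<longleftrightarrow> (\<forall>w h. P w h < ncom V)"

fun acc_within ::
  "'a adfa \<Rightarrow> 'a prover \<Rightarrow> 'a list \<Rightarrow> nat \<Rightarrow> nat \<Rightarrow> nat \<Rightarrow> real list list \<Rightarrow> history \<Rightarrow> real" where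
  "acc_within V P w 0 q p regs h = (if q = accs V then 1 else 0)"
| "acc_within V P w (Suc n) q p regs h =
     (if q = accs V then 1 else if q = rejs V then 0 else
       (let c = P w h; s = tape w p in
        \<Sum>os \<in> outcomes V q s c.
          outcome_prob V regs os *
          (let q' = fst (trans V q s c os);
               p' = nat (int p + snd (trans V q s c os));
               regs' = update_regs V q s c regs os
           in acc_within V P w n q' p' regs' (h @ [(q', p', os)]))))"

definition init_regs :: "'a adfa \<Rightarrow> real list list" where
  "init_regs V = map (\<lambda>m. basis_vec m 0) (dims V)"

definition accept_prob :: "'a adfa \<Rightarrow> 'a prover \<Rightarrow> 'a list \<Rightarrow> real" where
  "accept_prob V P w = (SUP n. acc_within V P w n (start V) 0 (init_regs V) [])"

definition weakly_verifies :: "'a adfa \<Rightarrow> 'a list set \<Rightarrow> real \<Rightarrow> bool" where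
  "weakly_verifies V L eps \<longleftrightarrow>
     (\<exists>P. valid_prover V P \<and> (\<forall>w \<in> L. accept_prob V P w \<ge> 1 - eps)) \<and>
     (\<forall>w. w \<notin> L \<longrightarrow> (\<forall>P. valid_prover V P \<longrightarrow> accept_prob V P w \<le> eps))"

definition perfect_completeness :: "'a adfa \<Rightarrow> 'a list set \<Rightarrow> bool" where
  "perfect_completeness V L \<longleftrightarrow>
     (\<exists>P. valid_prover V P \<and> (\<forall>w \<in> L. accept_prob V P w = 1))"

end

theory Submission
  imports Defs
begin

(* Fix a Turing machine for L and a base K exceeding all tape symbols.  The verifier keeps the
   simulated tape in two affine registers, as the base-K numbers formed by the cells from the head
   rightwards and from the head leftwards, least significant digit next to the head.  For every
   machine step the prover announces the scanned symbol and its left neighbour, the verifier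
   subtracts them from the registers and tosses a fair coin: heads, it applies the transition,
   which is an affine map of the two numbers; tails, it lets the prover empty both registers by
   subtracting K again and again.  After a wrong announcement a register holds an integer that is
   not a multiple of K, and the final weighing of the emptied register exposes it with probability
   at least 1/3.  When the simulated machine accepts, the verifier accepts with probability eps/3
   and otherwise restarts.

   Soundness follows from a potential on configurations that never increases in expectation
   (sound_bound).  For completeness, the honest prover recomputes the registers by replaying the
   public history; it is never rejected and every round accepts with probability at least
   2^-T eps/3, where T is the running time of the machine, so it is accepted with probability 1. *)

definition no_outcome :: "'a adfa \<Rightarrow> nat option list" where
  "no_outcome V = replicate (length (dims V)) None"

definition weigh_outcome :: "'a adfa \<Rightarrow> nat \<Rightarrow> nat \<Rightarrow> nat option list" where
  "weigh_outcome V i j = (no_outcome V)[i := Some j]"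

definition next_value ::
  "'a adfa \<Rightarrow> 'a prover \<Rightarrow> 'a list \<Rightarrow> (nat \<Rightarrow> nat \<Rightarrow> real list list \<Rightarrow> history \<Rightarrow> real) \<Rightarrow>
   nat \<Rightarrow> nat \<Rightarrow> real list list \<Rightarrow> history \<Rightarrow> nat option list \<Rightarrow> real" where
  "next_value V P w F q p regs h os =
     (let c = P w h; s = tape w p;
          q' = fst (trans V q s c os); p' = nat (int p + snd (trans V q s c os))
      in F q' p' (update_regs V q s c regs os) (h @ [(q', p', os)]))"

definition expected_next ::
  "'a adfa \<Rightarrow> 'a prover \<Rightarrow> 'a list \<Rightarrow> (nat \<Rightarrow> nat \<Rightarrow> real list list \<Rightarrow> history \<Rightarrow> real) \<Rightarrow>
   nat \<Rightarrow> nat \<Rightarrow> real list list \<Rightarrow> history \<Rightarrow> real" where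
  "expected_next V P w F q p regs h =
     (\<Sum>os \<in> outcomes V q (tape w p) (P w h). outcome_prob V regs os * next_value V P w F q p regs h os)"

lemma acc_within_Suc_expected_next:
  "q \<noteq> accs V \<Longrightarrow> q \<noteq> rejs V \<Longrightarrow>
   acc_within V P w (Suc n) q p regs h = expected_next V P w (acc_within V P w n) q p regs h"
  by (simp add: expected_next_def next_value_def Let_def)

declare acc_within.simps(2) [simp del]

lemma acc_within_accs [simp]: "acc_within V P w n (accs V) p regs h = 1"
  by (cases n) (simp_all add: acc_within.simps(2))

lemma acc_within_rejs [simp]: "rejs V \<noteq> accs V \<Longrightarrow> acc_within V P w n (rejs V) p regs h = 0"
  by (cases n) (simp_all add: acc_within.simps(2))

lemma outcome_prob_nonneg: "0 \<le> outcome_prob V regs os"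
  unfolding outcome_prob_def l1norm_def by (auto intro!: prod_nonneg divide_nonneg_nonneg sum_list_nonneg)

lemma acc_within_nonneg: "0 \<le> acc_within V P w n q p regs h"
proof (induction n arbitrary: q p regs h)
  case (Suc n)
  then show ?case by (simp add: acc_within.simps(2) Let_def sum_nonneg outcome_prob_nonneg)
qed simp

lemma case_reg_op_const: "(case x of Apply _ \<Rightarrow> a | Weigh \<Rightarrow> b) = (if x = Weigh then b else a)"
  by (cases x) auto

lemma outcomes_no_weigh:
  assumes "\<And>r. r < length (dims V) \<Longrightarrow> act V q s c r \<noteq> Weigh"
  shows "outcomes V q s c = {no_outcome V}"
proof -
  have "os \<in> outcomes V q s c \<longleftrightarrow> os = no_outcome V" for os
  proof -
    have "os \<in> outcomes V q s c \<longleftrightarrow> length os = length (dims V) \<and> (\<forall>r < length (dims V). os ! r = None)"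
      using assms by (auto simp: outcomes_def case_reg_op_const)
    also have "\<dots> \<longleftrightarrow> os = no_outcome V"
      by (auto simp: no_outcome_def list_eq_iff_nth_eq)
    finally show ?thesis .
  qed
  then show ?thesis by blast
qed

lemma outcomes_weigh_one:
  assumes "i < length (dims V)" "act V q s c i = Weigh"
    and "\<And>r. r < length (dims V) \<Longrightarrow> r \<noteq> i \<Longrightarrow> act V q s c r \<noteq> Weigh"
  shows "outcomes V q s c = weigh_outcome V i ` {..<dims V ! i}"
proof -
  have "os \<in> outcomes V q s c \<longleftrightarrow> (\<exists>j < dims V ! i. os = weigh_outcome V i j)" for os
  proof -
    have "os \<in> outcomes V q s c \<longleftrightarrow> length os = length (dims V) \<and> (\<exists>j < dims V ! i. os ! i = Some j)
        \<and> (\<forall>r < length (dims V). r \<noteq> i \<longrightarrow> os ! r = None)"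
      using assms by (auto simp: outcomes_def case_reg_op_const)
    also have "\<dots> \<longleftrightarrow> (\<exists>j < dims V ! i. os = weigh_outcome V i j)"
      using assms(1) by (auto simp: weigh_outcome_def no_outcome_def list_eq_iff_nth_eq nth_list_update)
    finally show ?thesis .
  qed
  then show ?thesis by auto
qed

lemma outcome_prob_no_outcome: "outcome_prob V regs (no_outcome V) = 1"
  by (simp add: outcome_prob_def no_outcome_def cong: conj_cong)

lemma outcome_prob_weigh_outcome:
  "i < length (dims V) \<Longrightarrow> outcome_prob V regs (weigh_outcome V i j) = \<bar>regs ! i ! j\<bar> / l1norm (regs ! i)"
proof -
  assume "i < length (dims V)"
  then have "{r. r < length (dims V) \<and> weigh_outcome V i j ! r \<noteq> None} = {i}"
    by (auto simp: weigh_outcome_def no_outcome_def nth_list_update)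
  with \<open>i < length (dims V)\<close> show ?thesis
    by (simp add: outcome_prob_def weigh_outcome_def no_outcome_def)
qed

lemma expected_next_no_weigh:
  assumes "\<And>r. r < length (dims V) \<Longrightarrow> act V q (tape w p) (P w h) r \<noteq> Weigh"
  shows "expected_next V P w F q p regs h = next_value V P w F q p regs h (no_outcome V)"
  by (simp add: expected_next_def outcomes_no_weigh[OF assms] outcome_prob_no_outcome)

lemma expected_next_weigh_one:
  assumes "i < length (dims V)" "act V q (tape w p) (P w h) i = Weigh"
    and "\<And>r. r < length (dims V) \<Longrightarrow> r \<noteq> i \<Longrightarrow> act V q (tape w p) (P w h) r \<noteq> Weigh"
  shows "expected_next V P w F q p regs h =
    (\<Sum>j < dims V ! i. \<bar>regs ! i ! j\<bar> / l1norm (regs ! i) * next_value V P w F q p regs h (weigh_outcome V i j))"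
proof -
  have "inj_on (weigh_outcome V i) {..<dims V ! i}"
  proof (rule inj_onI)
    fix j j' assume "weigh_outcome V i j = weigh_outcome V i j'"
    then have "weigh_outcome V i j ! i = weigh_outcome V i j' ! i" by simp
    with assms(1) show "j = j'" by (simp add: weigh_outcome_def no_outcome_def)
  qed
  then show ?thesis
    by (simp add: expected_next_def outcomes_weigh_one[OF assms] sum.reindex
        outcome_prob_weigh_outcome[OF assms(1)])
qed

lemma acc_within_le_potential:
  fixes Inv :: "nat \<Rightarrow> nat \<Rightarrow> real list list \<Rightarrow> history \<Rightarrow> bool"
    and \<Phi> :: "nat \<Rightarrow> nat \<Rightarrow> real list list \<Rightarrow> history \<Rightarrow> real"
  assumes nonneg: "\<And>q p regs h. Inv q p regs h \<Longrightarrow> 0 \<le> \<Phi> q p regs h"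
    and accept: "\<And>p regs h. Inv (accs V) p regs h \<Longrightarrow> 1 \<le> \<Phi> (accs V) p regs h"
    and step: "\<And>F q p regs h. Inv q p regs h \<Longrightarrow> q \<noteq> accs V \<Longrightarrow> q \<noteq> rejs V \<Longrightarrow>
        (\<And>q' p' regs' h'. Inv q' p' regs' h' \<Longrightarrow> F q' p' regs' h' \<le> \<Phi> q' p' regs' h') \<Longrightarrow>
        expected_next V P w F q p regs h \<le> \<Phi> q p regs h"
    and "Inv q p regs h"
  shows "acc_within V P w n q p regs h \<le> \<Phi> q p regs h"
  using \<open>Inv q p regs h\<close>
proof (induction n arbitrary: q p regs h)
  case 0
  then show ?case using nonneg accept by (cases "q = accs V") auto
next
  case (Suc n)
  consider "q = accs V" | "q = rejs V" "q \<noteq> accs V" | "q \<noteq> accs V" "q \<noteq> rejs V" by blast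
  then show ?case
  proof cases
    case 3
    then show ?thesis
      unfolding acc_within_Suc_expected_next[OF 3] using step[OF Suc.prems 3] Suc.IH by blast
  qed (use Suc.prems nonneg accept in auto)
qed

lemma eventually_acc_within_SucI:
  assumes "q \<noteq> accs V" "q \<noteq> rejs V"
    and "\<forall>\<^sub>F n in sequentially. v \<le> expected_next V P w (acc_within V P w n) q p regs h"
  shows "\<forall>\<^sub>F n in sequentially. v \<le> acc_within V P w n q p regs h"
  using assms by (simp add: acc_within_Suc_expected_next flip: eventually_sequentially_Suc[of "\<lambda>n. v \<le> acc_within V P w n q p regs h"])

fun replay ::
  "'a adfa \<Rightarrow> (nat \<Rightarrow> real list list \<Rightarrow> nat) \<Rightarrow> 'a list \<Rightarrow> history \<Rightarrow> nat \<times> nat \<times> real list list"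
where
  "replay V \<sigma> w [] = (start V, 0, init_regs V)"
| "replay V \<sigma> w ((q', p', os) # h) =
     (case replay V \<sigma> w h of (q, p, regs) \<Rightarrow> (q', p', update_regs V q (tape w p) (\<sigma> q regs) regs os))"

definition replay_prover :: "'a adfa \<Rightarrow> (nat \<Rightarrow> real list list \<Rightarrow> nat) \<Rightarrow> 'a prover" where
  "replay_prover V \<sigma> w h = (case replay V \<sigma> w (rev h) of (q, p, regs) \<Rightarrow> \<sigma> q regs)"

lemma replay_prover_eq: "replay V \<sigma> w (rev h) = (q, p, regs) \<Longrightarrow> replay_prover V \<sigma> w h = \<sigma> q regs"
  by (simp add: replay_prover_def)

lemma replay_snoc:
  "replay V \<sigma> w (rev h) = (q, p, regs) \<Longrightarrow>
   replay V \<sigma> w (rev (h @ [(q', p', os)])) = (q', p', update_regs V q (tape w p) (replay_prover V \<sigma> w h) regs os)"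
  by (simp add: replay_prover_def)

lemma valid_replay_prover: "(\<And>q regs. \<sigma> q regs < ncom V) \<Longrightarrow> valid_prover V (replay_prover V \<sigma>)"
  by (simp add: valid_prover_def replay_prover_def split: prod.split)

lemma SUP_eq_1_if_eventually_close:
  fixes f :: "nat \<Rightarrow> real"
  assumes le1: "\<And>n. f n \<le> 1" and "r < 1" and close: "\<And>m. \<forall>\<^sub>F n in sequentially. 1 - r ^ m \<le> f n"
  shows "(SUP n. f n) = 1"
proof (rule antisym)
  show "(SUP n. f n) \<le> 1" using le1 by (rule cSUP_least[OF UNIV_not_empty])
  have bdd: "bdd_above (range f)" using le1 by (rule bdd_aboveI2)
  have below: "1 - r ^ m \<le> (SUP n. f n)" for m
  proof -
    obtain n where "1 - r ^ m \<le> f n" using eventually_happens'[OF _ close[of m]] by auto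
    also have "f n \<le> (SUP n. f n)" by (rule cSUP_upper[OF UNIV_I bdd])
    finally show ?thesis .
  qed
  show "1 \<le> (SUP n. f n)"
  proof (rule ccontr)
    assume "\<not> 1 \<le> (SUP n. f n)"
    then have "0 < 1 - (SUP n. f n)" by simp
    then obtain m where "r ^ m < 1 - (SUP n. f n)" using real_arch_pow_inv[OF _ \<open>r < 1\<close>] by blast
    with below[of m] show False by simp
  qed
qed

section \<open>Two-state registers\<close>

definition affine_pair :: "real \<Rightarrow> real list" where
  "affine_pair x = [1 - x, x]"

definition aff_apply :: "real \<times> real \<Rightarrow> real \<Rightarrow> real" where
  "aff_apply ab x = fst ab * x + snd ab"

lemma aff_apply_Pair: "aff_apply (a, b) x = a * x + b"
  by (simp add: aff_apply_def)

definition affine_op :: "real \<times> real \<Rightarrow> nat \<Rightarrow> nat \<Rightarrow> real" where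
  "affine_op ab i j = (case ab of (a, b) \<Rightarrow>
     if i = 0 then (if j = 0 then 1 - b else 1 - a - b) else (if j = 0 then b else a + b))"

lemma apply_op_affine_op: "apply_op (affine_op ab) (affine_pair x) = affine_pair (aff_apply ab x)"
  by (cases ab) (simp add: apply_op_def affine_op_def affine_pair_def aff_apply_def
      lessThan_Suc numeral_2_eq_2 upt_rec algebra_simps)

lemma affine_op_column_sum: "(\<Sum>i<2. affine_op ab i j) = 1"
  by (cases ab) (simp add: affine_op_def numeral_2_eq_2 lessThan_Suc)

lemma affine_op_rational: "fst ab \<in> \<rat> \<Longrightarrow> snd ab \<in> \<rat> \<Longrightarrow> affine_op ab i j \<in> \<rat>"
  by (cases ab) (simp add: affine_op_def)

lemma basis_vec_two: "j < 2 \<Longrightarrow> basis_vec 2 j = affine_pair (real j)"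
  by (auto simp: basis_vec_def affine_pair_def upt_rec numeral_2_eq_2 less_2_cases_iff)

definition weigh_prob :: "real \<Rightarrow> nat \<Rightarrow> real" where
  "weigh_prob x j = \<bar>affine_pair x ! j\<bar> / l1norm (affine_pair x)"

lemma l1norm_affine_pair: "l1norm (affine_pair x) = \<bar>1 - x\<bar> + \<bar>x\<bar>"
  by (simp add: l1norm_def affine_pair_def)

lemma weigh_prob_nonneg: "0 \<le> weigh_prob x j"
  by (simp add: weigh_prob_def l1norm_affine_pair)

lemma weigh_prob_sum: "weigh_prob x 0 + weigh_prob x 1 = 1"
proof -
  have "\<bar>1 - x\<bar> + \<bar>x\<bar> \<noteq> 0" by linarith
  then show ?thesis
    by (simp add: weigh_prob_def l1norm_def affine_pair_def add_divide_distrib[symmetric])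
qed

lemma weigh_mix_le:
  "A \<le> a \<Longrightarrow> B \<le> b \<Longrightarrow> weigh_prob x 0 * A + weigh_prob x 1 * B \<le> weigh_prob x 0 * a + weigh_prob x 1 * b"
  by (intro add_mono mult_left_mono) (simp_all add: weigh_prob_nonneg)

lemma weigh_mix_le_const: "A \<le> c \<Longrightarrow> B \<le> c \<Longrightarrow> weigh_prob x 0 * A + weigh_prob x 1 * B \<le> c"
  using weigh_mix_le[of A c B c x] weigh_prob_sum[of x] by (simp add: distrib_right[symmetric])

lemma weigh_prob_unit_interval:
  "0 \<le> x \<Longrightarrow> x \<le> 1 \<Longrightarrow> weigh_prob x 0 = 1 - x \<and> weigh_prob x 1 = x"
  by (simp add: weigh_prob_def l1norm_def affine_pair_def)

lemma weigh_prob_nonzero_int: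
  assumes "m \<noteq> 0"
  shows "weigh_prob (of_int m) 0 \<le> 2/3"
proof -
  let ?x = "real_of_int m"
  have "?x \<ge> 1 \<or> ?x \<le> -1" using assms by linarith
  then have "3 * \<bar>1 - ?x\<bar> \<le> 2 * (\<bar>1 - ?x\<bar> + \<bar>?x\<bar>)" by (auto split: abs_split)
  moreover have "0 < \<bar>1 - ?x\<bar> + \<bar>?x\<bar>" by linarith
  ultimately show ?thesis by (simp add: weigh_prob_def l1norm_def affine_pair_def divide_le_eq)
qed

lemma expected_next_weigh_pair:
  assumes "i < length (dims V)" "dims V ! i = 2" "regs ! i = affine_pair x"
    and "act V q (tape w p) (P w h) i = Weigh"
    and "\<And>r. r < length (dims V) \<Longrightarrow> r \<noteq> i \<Longrightarrow> act V q (tape w p) (P w h) r \<noteq> Weigh"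
  shows "expected_next V P w F q p regs h =
    weigh_prob x 0 * next_value V P w F q p regs h (weigh_outcome V i 0) +
    weigh_prob x 1 * next_value V P w F q p regs h (weigh_outcome V i 1)"
  using assms by (simp add: expected_next_weigh_one numeral_2_eq_2 weigh_prob_def)

section \<open>Tapes as pairs of numbers\<close>

definition finite_support :: "(int \<Rightarrow> nat) \<Rightarrow> bool" where
  "finite_support tp \<longleftrightarrow> finite {j. tp j \<noteq> 0}"

(* enc_right k tp h reads the cells h, h + 1, ... and enc_left k tp h the cells h - 1, h - 2, ...
   as base-k numerals whose least significant digit is the cell next to the head. *)
definition enc_right :: "nat \<Rightarrow> (int \<Rightarrow> nat) \<Rightarrow> int \<Rightarrow> real" where
  "enc_right k tp h = (\<Sum>i. real (tp (h + int i)) * real k ^ i)"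

definition enc_left :: "nat \<Rightarrow> (int \<Rightarrow> nat) \<Rightarrow> int \<Rightarrow> real" where
  "enc_left k tp h = enc_right k (\<lambda>j. tp (- j)) (1 - h)"

lemma finite_support_reflect: "finite_support tp \<Longrightarrow> finite_support (\<lambda>j. tp (- j))"
proof -
  assume "finite_support tp"
  moreover have "{j. tp (- j) \<noteq> 0} = uminus -` {j. tp j \<noteq> 0}" by auto
  moreover have "inj (uminus :: int \<Rightarrow> int)" by (auto simp: inj_def)
  ultimately show ?thesis unfolding finite_support_def by (metis finite_vimageI)
qed

lemma finite_support_update: "finite_support tp \<Longrightarrow> finite_support (tp(h := s))"
proof -
  assume "finite_support tp"
  moreover have "{j. (tp(h := s)) j \<noteq> 0} \<subseteq> insert h {j. tp j \<noteq> 0}" by auto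
  ultimately show ?thesis unfolding finite_support_def by (meson finite_insert finite_subset)
qed

lemma finite_support_shift: "finite_support tp \<Longrightarrow> finite {i::nat. tp (h + int i) \<noteq> 0}"
proof -
  assume "finite_support tp"
  moreover have "{i::nat. tp (h + int i) \<noteq> 0} = (\<lambda>i. h + int i) -` {j. tp j \<noteq> 0}" by auto
  moreover have "inj (\<lambda>i::nat. h + int i)" by (auto simp: inj_def)
  ultimately show ?thesis unfolding finite_support_def by (metis finite_vimageI)
qed

lemma enc_right_unfold:
  assumes "finite_support tp"
  shows "enc_right k tp h = tp h + k * enc_right k tp (h + 1)"
proof -
  let ?f = "\<lambda>i. real (tp (h + int i)) * real k ^ i"
  let ?g = "\<lambda>i. real (tp (h + 1 + int i)) * real k ^ i"
  have "summable ?f" by (rule summable_finite[OF finite_support_shift[OF assms, of h]]) auto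
  have "summable ?g" by (rule summable_finite[OF finite_support_shift[OF assms, of "h + 1"]]) auto
  have "suminf ?f - ?f 0 = (\<Sum>i. ?f (Suc i))" using suminf_split_head[OF \<open>summable ?f\<close>] ..
  also have "\<dots> = (\<Sum>i. real k * ?g i)" by (simp add: algebra_simps)
  also have "\<dots> = real k * suminf ?g" using suminf_mult[OF \<open>summable ?g\<close>] .
  finally show ?thesis unfolding enc_right_def by simp
qed

lemma enc_left_unfold:
  assumes "finite_support tp"
  shows "enc_left k tp (h + 1) = tp h + k * enc_left k tp h"
  using enc_right_unfold[OF finite_support_reflect[OF assms], of k "- h"] by (simp add: enc_left_def)

lemma enc_right_cong: "(\<And>j. h \<le> j \<Longrightarrow> tp j = tp' j) \<Longrightarrow> enc_right k tp h = enc_right k tp' h"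
  unfolding enc_right_def by (rule arg_cong[where f = suminf]) auto

lemma enc_left_cong: "(\<And>j. j < h \<Longrightarrow> tp j = tp' j) \<Longrightarrow> enc_left k tp h = enc_left k tp' h"
  unfolding enc_left_def by (rule enc_right_cong) auto

lemma enc_right_zero: "(\<And>j. h \<le> j \<Longrightarrow> tp j = 0) \<Longrightarrow> enc_right k tp h = 0"
  by (simp add: enc_right_def)

lemma enc_left_zero: "(\<And>j. j < h \<Longrightarrow> tp j = 0) \<Longrightarrow> enc_left k tp h = 0"
  unfolding enc_left_def by (rule enc_right_zero) auto

lemma enc_right_nat:
  assumes "finite_support tp"
  obtains m :: nat where "enc_right k tp h = m"
proof -
  have "enc_right k tp h = (\<Sum>i | tp (h + int i) \<noteq> 0. real (tp (h + int i)) * real k ^ i)"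
    unfolding enc_right_def by (rule suminf_finite[OF finite_support_shift[OF assms]]) auto
  also have "\<dots> = real (\<Sum>i | tp (h + int i) \<noteq> 0. tp (h + int i) * k ^ i)" by simp
  finally show ?thesis using that by blast
qed

lemma enc_right_digit:
  assumes "finite_support tp"
  obtains m :: nat where "enc_right k tp h = tp h + k * m"
proof -
  obtain m :: nat where "enc_right k tp (h + 1) = m" using enc_right_nat[OF assms] .
  then have "enc_right k tp h = tp h + k * m" using enc_right_unfold[OF assms, of k h] by simp
  then show ?thesis by (rule that)
qed

lemma enc_left_digit:
  assumes "finite_support tp"
  obtains m :: nat where "enc_left k tp h = tp (h - 1) + k * m"
proof -
  obtain m :: nat where "enc_left k tp (h - 1) = m"
    unfolding enc_left_def using enc_right_nat[OF finite_support_reflect[OF assms]] .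
  then have "enc_left k tp h = tp (h - 1) + k * m" using enc_left_unfold[OF assms, of k "h - 1"] by simp
  then show ?thesis by (rule that)
qed

(* The affine maps taking the two encodings, with the scanned symbol and (on the left) its left
   neighbour b removed, to the encodings after writing s and moving the head by d. *)
definition right_update :: "nat \<Rightarrow> int \<Rightarrow> nat \<Rightarrow> nat \<Rightarrow> real \<times> real" where
  "right_update k d s b = (if d = 0 then (1, s) else if d = 1 then (1 / k, 0) else (k, k * s + b))"

definition left_update :: "nat \<Rightarrow> int \<Rightarrow> nat \<Rightarrow> nat \<Rightarrow> real \<times> real" where
  "left_update k d s b = (if d = 0 then (1, b) else if d = 1 then (k, k * b + s) else (1 / k, 0))"

lemma enc_write_move:
  assumes "finite_support tp" "0 < k" "d \<in> {-1, 0, 1}"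
  shows "aff_apply (right_update k d s (tp (h - 1))) (enc_right k tp h - tp h) = enc_right k (tp(h := s)) (h + d)"
    and "aff_apply (left_update k d s (tp (h - 1))) (enc_left k tp h - tp (h - 1)) = enc_left k (tp(h := s)) (h + d)"
proof -
  let ?t = "tp(h := s)"
  have fs: "finite_support ?t" using assms(1) by (rule finite_support_update)
  have R: "enc_right k tp h = tp h + k * enc_right k tp (h + 1)"
    "enc_right k ?t h = s + k * enc_right k ?t (h + 1)"
    "enc_right k ?t (h - 1) = tp (h - 1) + k * enc_right k ?t h"
    using enc_right_unfold[OF assms(1), of k h] enc_right_unfold[OF fs, of k h]
      enc_right_unfold[OF fs, of k "h - 1"] by simp_all
  have L: "enc_left k tp h = tp (h - 1) + k * enc_left k tp (h - 1)"
    "enc_left k ?t (h + 1) = s + k * enc_left k ?t h"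
    using enc_left_unfold[OF assms(1), of k "h - 1"] enc_left_unfold[OF fs, of k h] by simp_all
  have "enc_right k ?t (h + 1) = enc_right k tp (h + 1)" by (rule enc_right_cong) simp
  moreover have "enc_left k ?t h = enc_left k tp h" by (rule enc_left_cong) simp
  moreover have "enc_left k ?t (h - 1) = enc_left k tp (h - 1)" by (rule enc_left_cong) simp
  ultimately
  show "aff_apply (right_update k d s (tp (h - 1))) (enc_right k tp h - tp h) = enc_right k ?t (h + d)"
    and "aff_apply (left_update k d s (tp (h - 1))) (enc_left k tp h - tp (h - 1)) = enc_left k ?t (h + d)"
    using assms(2,3) R L by (auto simp: aff_apply_def right_update_def left_update_def algebra_simps)
qed

definition nonmultiple :: "nat \<Rightarrow> real \<Rightarrow> bool" where
  "nonmultiple k x \<longleftrightarrow> (\<exists>m::int. x = of_int m \<and> \<not> int k dvd m)"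

lemma nonmultiple_diff: "nonmultiple k x \<Longrightarrow> nonmultiple k (x - k)"
proof -
  assume "nonmultiple k x"
  then obtain m where "x = of_int m" "\<not> int k dvd m" unfolding nonmultiple_def by blast
  then have "x - k = of_int (m - int k)" "\<not> int k dvd m - int k"
    by (simp, metis diff_add_cancel dvd_add dvd_refl)
  then show ?thesis unfolding nonmultiple_def by blast
qed

lemma nonmultiple_weigh_prob: "nonmultiple k x \<Longrightarrow> weigh_prob x 0 \<le> 2/3"
proof -
  assume "nonmultiple k x"
  then obtain m where "x = of_int m" "m \<noteq> 0" unfolding nonmultiple_def by fastforce
  then show ?thesis using weigh_prob_nonzero_int by simp
qed

lemma nonmultiple_wrong_digit:
  assumes "a < k" "v < k" "a \<noteq> v"
  shows "nonmultiple k (real v + real k * real m - real a)"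
proof -
  have "\<not> int k dvd (int v - int a) + int m * int k"
  proof
    assume "int k dvd (int v - int a) + int m * int k"
    then have "int v mod int k = int a mod int k" by (simp add: mod_eq_dvd_iff)
    with assms show False by simp
  qed
  then show ?thesis unfolding nonmultiple_def
    by (intro exI[of _ "(int v - int a) + int m * int k"]) simp
qed

definition tm_run :: "'a tm \<Rightarrow> 'a list \<Rightarrow> nat \<Rightarrow> tm_config" where
  "tm_run M w t = (tm_step M ^^ t) (tm_init M w)"

definition tm_config_ok :: "'a tm \<Rightarrow> tm_config \<Rightarrow> bool" where
  "tm_config_ok M c \<longleftrightarrow>
     fst c < tm_nst M \<and> (\<forall>j. snd (snd c) j < tm_nsym M) \<and> finite_support (snd (snd c))"

definition input_tape :: "'a tm \<Rightarrow> 'a list \<Rightarrow> int \<Rightarrow> nat" where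
  "input_tape M w = snd (snd (tm_init M w))"

lemma tm_run_0: "tm_run M w 0 = (tm_start M, 0, input_tape M w)"
  by (simp add: tm_run_def input_tape_def tm_init_def)

lemma tm_run_Suc: "tm_run M w (Suc t) = tm_step M (tm_run M w t)"
  by (simp add: tm_run_def)

lemma tm_accepts_iff_run: "tm_accepts M w \<longleftrightarrow> (\<exists>t. fst (tm_run M w t) = tm_acc M)"
  by (simp add: tm_accepts_def tm_run_def)

lemma input_tape_eq:
  "input_tape M w j = (if 0 \<le> j \<and> j < int (length w) then tm_enc M (w ! nat j) else 0)"
  by (simp add: input_tape_def tm_init_def)

lemma finite_support_input_tape: "finite_support (input_tape M w)"
proof -
  have "{j. input_tape M w j \<noteq> 0} \<subseteq> {0..<int (length w)}"
    by (auto simp: input_tape_eq split: if_splits)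
  then show ?thesis unfolding finite_support_def by (meson finite_atLeastLessThan_int finite_subset)
qed

lemma tm_init_ok: "wf_tm M \<Longrightarrow> tm_config_ok M (tm_init M w)"
  using finite_support_input_tape[of M w]
  by (auto simp: tm_config_ok_def input_tape_def tm_init_def wf_tm_def)

lemma enc_right_input_tape_beyond: "length w \<le> p \<Longrightarrow> enc_right k (input_tape M w) (int p) = 0"
  by (rule enc_right_zero) (simp add: input_tape_eq)

lemma enc_left_input_tape_start: "enc_left k (input_tape M w) 0 = 0"
  by (rule enc_left_zero) (simp add: input_tape_eq)

lemma enc_right_input_tape_Sym:
  assumes "tape w p = Sym y"
  shows "enc_right k (input_tape M w) (int (p - 1)) = tm_enc M y + k * enc_right k (input_tape M w) (int p)"
proof -
  have "0 < p" "p \<le> length w" "y = w ! (p - 1)" using assms by (auto simp: tape_def split: if_splits)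
  moreover from \<open>0 < p\<close> have "nat (int p - 1) = p - 1" by linarith
  ultimately show ?thesis
    using enc_right_unfold[OF finite_support_input_tape, of k M w "int (p - 1)"] by (simp add: input_tape_eq)
qed

lemma tape_REnd_iff: "tape w p = REnd \<longleftrightarrow> length w < p"
  by (simp add: tape_def)

lemma tm_delta_ok:
  assumes "wf_tm M" "q < tm_nst M" "a < tm_nsym M" "tm_delta M q a = (q', s, d)"
  shows "q' < tm_nst M" "s < tm_nsym M" "d \<in> {-1, 0, 1}"
  using assms unfolding wf_tm_def by fastforce+

lemma tm_step_ok: "wf_tm M \<Longrightarrow> tm_config_ok M c \<Longrightarrow> tm_config_ok M (tm_step M c)"
proof -
  assume wf: "wf_tm M" and c: "tm_config_ok M c"
  obtain q h tp where cc: "c = (q, h, tp)" by (cases c) auto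
  obtain q' s d where dd: "tm_delta M q (tp h) = (q', s, d)" by (cases "tm_delta M q (tp h)") auto
  have "q < tm_nst M" "tp h < tm_nsym M" using c cc by (auto simp: tm_config_ok_def)
  note tm_delta_ok[OF wf this dd]
  then show ?thesis using c cc dd finite_support_update by (auto simp: tm_step_def tm_config_ok_def)
qed

lemma tm_run_ok: "wf_tm M \<Longrightarrow> tm_config_ok M (tm_run M w t)"
  by (induction t) (simp_all add: tm_run_def tm_init_ok tm_step_ok)

lemma tm_run_rejected:
  assumes "fst (tm_run M w t) = tm_rej M" "t \<le> t'"
  shows "fst (tm_run M w t') = tm_rej M"
  using assms(2)
proof (induction t' rule: dec_induct)
  case (step t')
  then show ?case by (cases "tm_run M w t'") (simp add: tm_run_Suc tm_step_def)
qed (use assms(1) in simp)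

lemma tm_run_step:
  assumes "wf_tm M" "tm_run M w t = (q, h, tp)" "q \<noteq> tm_acc M" "q \<noteq> tm_rej M"
    and "tm_delta M q (tp h) = (q', s, d)"
  shows "q' < tm_nst M" "d \<in> {-1, 0, 1}" "tm_run M w (Suc t) = (q', h + d, tp(h := s))"
proof -
  have "q < tm_nst M" "tp h < tm_nsym M" using tm_run_ok[OF assms(1), of w t] assms(2)
    by (auto simp: tm_config_ok_def)
  then show "q' < tm_nst M" "d \<in> {-1, 0, 1}" using tm_delta_ok[OF assms(1) _ _ assms(5)] by simp_all
  show "tm_run M w (Suc t) = (q', h + d, tp(h := s))" using assms(2-5) by (simp add: tm_run_Suc tm_step_def)
qed

section \<open>The verifier\<close>

(* Registers 0 and 1 hold the two tape encodings, register 2 is a fair coin and register 3 holds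
   the acceptance probability alpha.  ToEnd walks to the right end-marker resetting the registers,
   Load reads the input into register 0 from right to left.  In Sim q the prover announces the
   scanned symbol a and its left neighbour b as c = a + K * b; the coin then selects Step q a b,
   which performs the transition of the machine, or CheckR followed by CheckL, in which the prover
   subtracts K from register 0, resp. 1, until it declares the register empty (c = 0). *)
datatype vstate = Accept | Reject | ToEnd | Load | CheckR | CheckL | Sim nat | Step nat nat nat

definition base :: "'a tm \<Rightarrow> nat" where
  "base M = Suc (tm_nsym M)"

definition valid_vstate :: "nat \<Rightarrow> nat \<Rightarrow> vstate \<Rightarrow> bool" where
  "valid_vstate N K X = (case X of Sim q \<Rightarrow> q < N | Step q a b \<Rightarrow> q < N \<and> a < K \<and> b < K | _ \<Rightarrow> True)"

definition enc_vstate :: "nat \<Rightarrow> nat \<Rightarrow> vstate \<Rightarrow> nat" where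
  "enc_vstate N K X = (case X of
     Accept \<Rightarrow> 0 | Reject \<Rightarrow> 1 | ToEnd \<Rightarrow> 2 | Load \<Rightarrow> 3 | CheckR \<Rightarrow> 4 | CheckL \<Rightarrow> 5
   | Sim q \<Rightarrow> 6 + q | Step q a b \<Rightarrow> 6 + N + (q * K + a) * K + b)"

definition dec_vstate :: "nat \<Rightarrow> nat \<Rightarrow> nat \<Rightarrow> vstate" where
  "dec_vstate N K n =
    (if n < 6 then [Accept, Reject, ToEnd, Load, CheckR, CheckL] ! n
     else if n < 6 + N then Sim (n - 6)
     else let i = n - 6 - N in Step (i div K div K) (i div K mod K) (i mod K))"

lemma dec_enc_vstate: "valid_vstate N K X \<Longrightarrow> dec_vstate N K (enc_vstate N K X) = X"
  by (cases X) (auto simp: valid_vstate_def enc_vstate_def dec_vstate_def Let_def)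

lemma enc_vstate_less:
  assumes "valid_vstate N K X"
  shows "enc_vstate N K X < 6 + N + N * K * K"
proof (cases X)
  case (Step q a b)
  then have "q < N" "a < K" "b < K" using assms by (simp_all add: valid_vstate_def)
  have "q * K + a < Suc q * K" using \<open>a < K\<close> by simp
  also have "\<dots> \<le> N * K" using \<open>q < N\<close> by (intro mult_le_mono1) simp
  finally have "q * K + a < N * K" .
  have "(q * K + a) * K + b < Suc (q * K + a) * K" using \<open>b < K\<close> by simp
  also have "\<dots> \<le> N * K * K" using \<open>q * K + a < N * K\<close> by (intro mult_le_mono1) simp
  finally show ?thesis using Step by (simp add: enc_vstate_def)
qed (use assms in \<open>auto simp: valid_vstate_def enc_vstate_def\<close>)

lemma dec_vstate_valid:
  assumes "n < 6 + N + N * K * K"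
  shows "valid_vstate N K (dec_vstate N K n)"
proof -
  have "(n - 6 - N) div K div K < N" if "6 + N \<le> n"
    using assms that by (metis add_diff_inverse_nat diff_diff_left less_mult_imp_div_less
        div_mult2_eq mult.assoc nat_add_left_cancel_less not_less)
  moreover have "0 < K" if "6 + N \<le> n" using assms that by (cases "K = 0") auto
  ultimately show ?thesis
    by (auto simp: dec_vstate_def valid_vstate_def Let_def nth_Cons' split: if_splits)
qed

definition verifier_weighs :: "'a tm \<Rightarrow> vstate \<Rightarrow> nat \<Rightarrow> nat \<Rightarrow> bool" where
  "verifier_weighs M X c r = (case X of
     CheckR \<Rightarrow> r = 0 \<and> c = 0
   | CheckL \<Rightarrow> r = 1 \<and> c = 0
   | Sim q \<Rightarrow> if q = tm_acc M then r = 3 else q \<noteq> tm_rej M \<and> r = 2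
   | _ \<Rightarrow> False)"

definition verifier_coeffs :: "'a tm \<Rightarrow> real \<Rightarrow> vstate \<Rightarrow> 'a tsym \<Rightarrow> nat \<Rightarrow> nat \<Rightarrow> real \<times> real" where
  "verifier_coeffs M \<alpha> X s c r = (let K = base M in case X of
     ToEnd \<Rightarrow> (0, if r = 2 then 1/2 else if r = 3 then \<alpha> else 0)
   | Load \<Rightarrow> (case s of Sym y \<Rightarrow> if r = 0 then (K, tm_enc M y) else (1, 0) | _ \<Rightarrow> (1, 0))
   | CheckR \<Rightarrow> if r = 0 then (1, - K) else (1, 0)
   | CheckL \<Rightarrow> if r = 1 then (1, - K) else (1, 0)
   | Sim q \<Rightarrow>
       if r = 0 then (1, - real (c mod K)) else if r = 1 then (1, - real (c div K mod K)) else (1, 0)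
   | Step q a b \<Rightarrow> (case tm_delta M q a of (q', s', d) \<Rightarrow>
       if q' < tm_nst M \<and> d \<in> {-1, 0, 1} then
         (if r = 0 then right_update K d s' b else if r = 1 then left_update K d s' b
          else if r = 2 then (0, 1/2) else (1, 0))
       else (1, 0))
   | _ \<Rightarrow> (1, 0))"

definition verifier_act :: "'a tm \<Rightarrow> real \<Rightarrow> vstate \<Rightarrow> 'a tsym \<Rightarrow> nat \<Rightarrow> nat \<Rightarrow> reg_op" where
  "verifier_act M \<alpha> X s c r =
     (if verifier_weighs M X c r then Weigh else Apply (affine_op (verifier_coeffs M \<alpha> X s c r)))"

definition verifier_trans ::
  "'a tm \<Rightarrow> vstate \<Rightarrow> 'a tsym \<Rightarrow> nat \<Rightarrow> nat option list \<Rightarrow> vstate \<times> int" where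
  "verifier_trans M X s c os = (let K = base M in case X of
     ToEnd \<Rightarrow> if s = REnd then (Load, -1) else (ToEnd, 1)
   | Load \<Rightarrow> if s = LEnd then (Sim (tm_start M), 0) else (Load, -1)
   | CheckR \<Rightarrow> (if c \<noteq> 0 then CheckR else if os ! 0 = Some 0 then CheckL else Reject, 0)
   | CheckL \<Rightarrow> (if c \<noteq> 0 then CheckL else if os ! 1 = Some 0 then ToEnd else Reject, 0)
   | Sim q \<Rightarrow>
       (if q = tm_acc M then (if os ! 3 = Some 1 then Accept else ToEnd)
        else if q = tm_rej M then Reject
        else if os ! 2 = Some 1 then CheckR
        else Step q (c mod K) (c div K mod K), 0)
   | Step q a b \<Rightarrow> (case tm_delta M q a of (q', s', d) \<Rightarrow>
       (if q' < tm_nst M \<and> d \<in> {-1, 0, 1} then Sim q' else Reject, 0))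
   | _ \<Rightarrow> (X, 0))"

definition verifier :: "'a tm \<Rightarrow> real \<Rightarrow> 'a adfa" where
  "verifier M \<alpha> =
    \<lparr>nst = 6 + tm_nst M + tm_nst M * base M * base M, start = 2, accs = 0, rejs = 1,
     ncom = base M * base M, dims = replicate 4 2,
     act = \<lambda>q. verifier_act M \<alpha> (dec_vstate (tm_nst M) (base M) q),
     trans = \<lambda>q s c os. map_prod (enc_vstate (tm_nst M) (base M)) id
                          (verifier_trans M (dec_vstate (tm_nst M) (base M) q) s c os)\<rparr>"

lemma dims_verifier: "dims (verifier M \<alpha>) = replicate 4 2"
  by (simp add: verifier_def)

lemma verifier_coeffs_rational:
  assumes "\<alpha> \<in> \<rat>"
  shows "fst (verifier_coeffs M \<alpha> X s c r) \<in> \<rat>" "snd (verifier_coeffs M \<alpha> X s c r) \<in> \<rat>"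
proof -
  have "fst (verifier_coeffs M \<alpha> X s c r) \<in> \<rat> \<and> snd (verifier_coeffs M \<alpha> X s c r) \<in> \<rat>"
  proof (cases X)
    case (Step q a b)
    then show ?thesis
      by (cases "tm_delta M q a") (auto simp: verifier_coeffs_def Let_def right_update_def left_update_def)
  qed (use assms in \<open>auto simp: verifier_coeffs_def Let_def split: tsym.split\<close>)
  then show "fst (verifier_coeffs M \<alpha> X s c r) \<in> \<rat>" "snd (verifier_coeffs M \<alpha> X s c r) \<in> \<rat>" by auto
qed

lemma verifier_trans_valid:
  assumes "wf_tm M" "valid_vstate (tm_nst M) (base M) X" "verifier_trans M X s c os = (X', d)"
  shows "valid_vstate (tm_nst M) (base M) X'" "d \<in> {-1, 0, 1}"
    and "s = LEnd \<Longrightarrow> d \<noteq> -1" "s = REnd \<Longrightarrow> d \<noteq> 1"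
proof -
  have "tm_start M < tm_nst M" using assms(1) by (simp add: wf_tm_def)
  then have "valid_vstate (tm_nst M) (base M) X' \<and> d \<in> {-1, 0, 1} \<and>
      (s = LEnd \<longrightarrow> d \<noteq> -1) \<and> (s = REnd \<longrightarrow> d \<noteq> 1)"
  proof (cases X)
    case (Step q a b)
    then show ?thesis using assms(3) by (cases "tm_delta M q a") (auto simp: verifier_trans_def valid_vstate_def)
  qed (use assms(2,3) in \<open>auto simp: verifier_trans_def valid_vstate_def base_def split: if_splits\<close>)
  then show "valid_vstate (tm_nst M) (base M) X'" "d \<in> {-1, 0, 1}"
    and "s = LEnd \<Longrightarrow> d \<noteq> -1" "s = REnd \<Longrightarrow> d \<noteq> 1" by auto
qed

lemma wf_verifier:
  assumes "wf_tm M"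
  shows "wf_adfa (verifier M \<alpha>)"
  unfolding wf_adfa_def
proof (intro conjI allI impI ballI)
  let ?N = "tm_nst M" and ?K = "base M"
  have "2 \<le> ?K" using assms by (simp add: base_def wf_tm_def)
  then show "start (verifier M \<alpha>) < nst (verifier M \<alpha>)" "accs (verifier M \<alpha>) < nst (verifier M \<alpha>)"
    "rejs (verifier M \<alpha>) < nst (verifier M \<alpha>)" "accs (verifier M \<alpha>) \<noteq> rejs (verifier M \<alpha>)"
    "0 < ncom (verifier M \<alpha>)" by (simp_all add: verifier_def)
  show "0 < m" if "m \<in> set (dims (verifier M \<alpha>))" for m
    using that by (simp add: verifier_def)
  show "case act (verifier M \<alpha>) q s c r of
      Apply A \<Rightarrow> \<forall>j < dims (verifier M \<alpha>) ! r. (\<Sum>i < dims (verifier M \<alpha>) ! r. A i j) = 1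
    | Weigh \<Rightarrow> True" if "r < length (dims (verifier M \<alpha>))" for q s c r
    using that by (simp add: verifier_def verifier_act_def affine_op_column_sum)
  fix q s c os
  assume "q < nst (verifier M \<alpha>)"
  then have q: "q < 6 + ?N + ?N * ?K * ?K" by (simp add: verifier_def)
  obtain X' d where td: "verifier_trans M (dec_vstate ?N ?K q) s c os = (X', d)" by fastforce
  note valid = verifier_trans_valid[OF assms dec_vstate_valid[OF q] td]
  have tr: "trans (verifier M \<alpha>) q s c os = (enc_vstate ?N ?K X', d)" by (simp add: verifier_def td)
  show "fst (trans (verifier M \<alpha>) q s c os) < nst (verifier M \<alpha>)"
    using enc_vstate_less[OF valid(1)] unfolding tr by (simp add: verifier_def)
  show "snd (trans (verifier M \<alpha>) q s c os) \<in> {-1, 0, 1}" using valid(2) unfolding tr by simp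
  show "snd (trans (verifier M \<alpha>) q s c os) \<noteq> -1" if "s = LEnd" using valid(3)[OF that] unfolding tr by simp
  show "snd (trans (verifier M \<alpha>) q s c os) \<noteq> 1" if "s = REnd" using valid(4)[OF that] unfolding tr by simp
qed

lemma rational_verifier: "\<alpha> \<in> \<rat> \<Longrightarrow> rational_valued (verifier M \<alpha>)"
  by (simp add: rational_valued_def verifier_def verifier_act_def affine_op_rational verifier_coeffs_rational)

abbreviation regs4 :: "real \<Rightarrow> real \<Rightarrow> real \<Rightarrow> real \<Rightarrow> real list list" where
  "regs4 x0 x1 x2 x3 \<equiv> [affine_pair x0, affine_pair x1, affine_pair x2, affine_pair x3]"

locale verifier_setting =
  fixes M :: "'a tm" and \<epsilon> :: real
  assumes wf: "wf_tm M" and eps_pos: "0 < \<epsilon>" and eps_less: "\<epsilon> < 1/2"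
begin

abbreviation "N \<equiv> tm_nst M"
abbreviation "K \<equiv> base M"
abbreviation "\<alpha> \<equiv> \<epsilon> / 3"
abbreviation "V \<equiv> verifier M \<alpha>"
abbreviation "E \<equiv> enc_vstate N K"
abbreviation "valid \<equiv> valid_vstate N K"

definition succ_value ::
  "(nat \<Rightarrow> nat \<Rightarrow> real list list \<Rightarrow> history \<Rightarrow> real) \<Rightarrow> vstate \<Rightarrow> nat \<Rightarrow> real list list \<Rightarrow>
   history \<Rightarrow> nat option list \<Rightarrow> real" where
  "succ_value F X p regs h os = F (E X) p regs (h @ [(E X, p, os)])"

lemma K_pos: "0 < K"
  by (simp add: base_def)

lemma tm_start_less: "tm_start M < N"
  using wf by (simp add: wf_tm_def)

lemma tm_acc_less: "tm_acc M < N"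
  using wf by (simp add: wf_tm_def)

lemma act_verifier: "valid X \<Longrightarrow> act V (E X) s c r = verifier_act M \<alpha> X s c r"
  by (simp add: verifier_def dec_enc_vstate)

lemma next_value_verifier:
  "valid X \<Longrightarrow> next_value V P w F (E X) p regs h os =
     (case verifier_trans M X (tape w p) (P w h) os of (X', d) \<Rightarrow>
        succ_value F X' (nat (int p + d)) (update_regs V (E X) (tape w p) (P w h) regs os) h os)"
  by (simp add: next_value_def verifier_def dec_enc_vstate succ_value_def Let_def split: prod.split)

definition updated_reg :: "vstate \<Rightarrow> 'a tsym \<Rightarrow> nat \<Rightarrow> nat option list \<Rightarrow> nat \<Rightarrow> real \<Rightarrow> real list" where
  "updated_reg X s c os r x = (if verifier_weighs M X c r then basis_vec 2 (the (os ! r))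
     else affine_pair (aff_apply (verifier_coeffs M \<alpha> X s c r) x))"

lemma update_regs_verifier:
  "valid X \<Longrightarrow> update_regs V (E X) s c (regs4 x0 x1 x2 x3) os =
    [updated_reg X s c os 0 x0, updated_reg X s c os 1 x1, updated_reg X s c os 2 x2, updated_reg X s c os 3 x3]"
proof -
  assume "valid X"
  have "[0..<4] = [0, 1, 2, 3 :: nat]" by (simp add: upt_rec)
  with \<open>valid X\<close> show ?thesis
    by (simp add: update_regs_def dims_verifier act_verifier verifier_act_def updated_reg_def apply_op_affine_op)
qed

lemmas verifier_step_simps = act_verifier verifier_act_def verifier_weighs_def next_value_verifier
  verifier_trans_def update_regs_verifier updated_reg_def verifier_coeffs_def aff_apply_Pair
  dims_verifier weigh_outcome_def no_outcome_def basis_vec_two valid_vstate_def K_pos Let_def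

lemma expected_next_ToEnd:
  "expected_next V P w F (E ToEnd) p (regs4 x0 x1 x2 x3) h =
    (if tape w p = REnd then succ_value F Load (p - 1) (regs4 0 0 (1/2) \<alpha>) h (no_outcome V)
     else succ_value F ToEnd (Suc p) (regs4 0 0 (1/2) \<alpha>) h (no_outcome V))"
  by (simp add: expected_next_no_weigh verifier_step_simps nat_diff_distrib' nat_int_add[of p 1, simplified])

lemma expected_next_Load:
  "expected_next V P w F (E Load) p (regs4 x0 x1 x2 x3) h = (case tape w p of
      LEnd \<Rightarrow> succ_value F (Sim (tm_start M)) p (regs4 x0 x1 x2 x3) h (no_outcome V)
    | Sym y \<Rightarrow> succ_value F Load (p - 1) (regs4 (real K * x0 + tm_enc M y) x1 x2 x3) h (no_outcome V)
    | REnd \<Rightarrow> succ_value F Load (p - 1) (regs4 x0 x1 x2 x3) h (no_outcome V))"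
  by (cases "tape w p") (simp_all add: expected_next_no_weigh verifier_step_simps nat_diff_distrib')

lemma expected_next_Load_input:
  shows "update_regs V (E Load) (tape w (Suc p)) c
      (regs4 (enc_right K (input_tape M w) (int (Suc p))) x1 x2 x3) (no_outcome V) =
      regs4 (enc_right K (input_tape M w) (int p)) x1 x2 x3"
    and "expected_next V P w F (E Load) (Suc p) (regs4 (enc_right K (input_tape M w) (int (Suc p))) x1 x2 x3) h =
      succ_value F Load p (regs4 (enc_right K (input_tape M w) (int p)) x1 x2 x3) h (no_outcome V)"
proof -
  let ?x = "\<lambda>p. enc_right K (input_tape M w) (int p)"
  have "tape w (Suc p) \<noteq> LEnd" by (simp add: tape_def)
  moreover have "real K * ?x (Suc p) + tm_enc M y = ?x p" if "tape w (Suc p) = Sym y" for y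
    using enc_right_input_tape_Sym[OF that, of K] by simp
  moreover have "?x (Suc p) = ?x p" if "tape w (Suc p) = REnd"
    using that enc_right_input_tape_beyond[of w "Suc p"] enc_right_input_tape_beyond[of w p]
    by (simp add: tape_REnd_iff)
  ultimately show "update_regs V (E Load) (tape w (Suc p)) c (regs4 (?x (Suc p)) x1 x2 x3) (no_outcome V) =
      regs4 (?x p) x1 x2 x3"
    and "expected_next V P w F (E Load) (Suc p) (regs4 (?x (Suc p)) x1 x2 x3) h =
      succ_value F Load p (regs4 (?x p) x1 x2 x3) h (no_outcome V)"
    by (cases "tape w (Suc p)"; simp add: verifier_step_simps expected_next_Load)+
qed

lemma expected_next_CheckR_continue:
  "P w h \<noteq> 0 \<Longrightarrow> expected_next V P w F (E CheckR) p (regs4 x0 x1 x2 x3) h =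
    succ_value F CheckR p (regs4 (x0 - real K) x1 x2 x3) h (no_outcome V)"
  by (simp add: expected_next_no_weigh verifier_step_simps)

lemma expected_next_CheckR_stop:
  "P w h = 0 \<Longrightarrow> expected_next V P w F (E CheckR) p (regs4 x0 x1 x2 x3) h =
    weigh_prob x0 0 * succ_value F CheckL p (regs4 0 x1 x2 x3) h (weigh_outcome V 0 0) +
    weigh_prob x0 1 * succ_value F Reject p (regs4 1 x1 x2 x3) h (weigh_outcome V 0 1)"
  by (subst expected_next_weigh_pair[where i = 0]) (simp_all add: verifier_step_simps)

lemma expected_next_CheckL_continue:
  "P w h \<noteq> 0 \<Longrightarrow> expected_next V P w F (E CheckL) p (regs4 x0 x1 x2 x3) h =
    succ_value F CheckL p (regs4 x0 (x1 - real K) x2 x3) h (no_outcome V)"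
  by (simp add: expected_next_no_weigh verifier_step_simps)

lemma expected_next_CheckL_stop:
  "P w h = 0 \<Longrightarrow> expected_next V P w F (E CheckL) p (regs4 x0 x1 x2 x3) h =
    weigh_prob x1 0 * succ_value F ToEnd p (regs4 x0 0 x2 x3) h (weigh_outcome V 1 0) +
    weigh_prob x1 1 * succ_value F Reject p (regs4 x0 1 x2 x3) h (weigh_outcome V 1 1)"
  by (subst expected_next_weigh_pair[where i = 1]) (simp_all add: verifier_step_simps)

lemma expected_next_Sim_acc:
  "P w h = c \<Longrightarrow> expected_next V P w F (E (Sim (tm_acc M))) p (regs4 x0 x1 x2 x3) h =
    weigh_prob x3 0 * succ_value F ToEnd p (regs4 (x0 - real (c mod K)) (x1 - real (c div K mod K)) x2 0) h (weigh_outcome V 3 0) +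
    weigh_prob x3 1 * succ_value F Accept p (regs4 (x0 - real (c mod K)) (x1 - real (c div K mod K)) x2 1) h (weigh_outcome V 3 1)"
  using wf by (subst expected_next_weigh_pair[where i = 3]) (simp_all add: verifier_step_simps wf_tm_def)

lemma expected_next_Sim_rej:
  "P w h = c \<Longrightarrow> expected_next V P w F (E (Sim (tm_rej M))) p (regs4 x0 x1 x2 x3) h =
    succ_value F Reject p (regs4 (x0 - real (c mod K)) (x1 - real (c div K mod K)) x2 x3) h (no_outcome V)"
  using wf by (simp add: expected_next_no_weigh verifier_step_simps wf_tm_def)

lemma expected_next_Sim:
  assumes "q < N" "q \<noteq> tm_acc M" "q \<noteq> tm_rej M" "P w h = c"
  shows "expected_next V P w F (E (Sim q)) p (regs4 x0 x1 x2 x3) h =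
    weigh_prob x2 0 * succ_value F (Step q (c mod K) (c div K mod K)) p
      (regs4 (x0 - real (c mod K)) (x1 - real (c div K mod K)) 0 x3) h (weigh_outcome V 2 0) +
    weigh_prob x2 1 * succ_value F CheckR p (regs4 (x0 - real (c mod K)) (x1 - real (c div K mod K)) 1 x3) h (weigh_outcome V 2 1)"
  using assms by (subst expected_next_weigh_pair[where i = 2]) (simp_all add: verifier_step_simps)

lemma expected_next_Step:
  assumes "q < N" "a < K" "b < K" "tm_delta M q a = (q', s, d)"
  shows "expected_next V P w F (E (Step q a b)) p (regs4 x0 x1 x2 x3) h =
    (if q' < N \<and> d \<in> {-1, 0, 1} then
       succ_value F (Sim q') p (regs4 (aff_apply (right_update K d s b) x0) (aff_apply (left_update K d s b) x1) (1/2) x3)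
         h (no_outcome V)
     else succ_value F Reject p (regs4 x0 x1 x2 x3) h (no_outcome V))"
  using assms by (cases "q' < N \<and> d \<in> {-1, 0, 1}") (auto simp: expected_next_no_weigh verifier_step_simps)

lemma verifier_initial: "start V = E ToEnd" "init_regs V = regs4 0 0 0 0"
proof -
  have "replicate 4 v = [v, v, v, v]" for v :: "real list" by (simp add: numeral_eq_Suc)
  then show "start V = E ToEnd" "init_regs V = regs4 0 0 0 0"
    by (simp_all add: verifier_def enc_vstate_def init_regs_def basis_vec_two)
qed

lemma tm_run_cell_less: "tm_run M w t = (q, h, tp) \<Longrightarrow> tp j < K"
  using tm_run_ok[OF wf, of w t] by (simp add: tm_config_ok_def base_def less_SucI)

section \<open>Soundness\<close>

lemma wrong_claim_nonmultiple:
  assumes "tm_run M w t = (q, h, tp)" "a < K" "b < K" "\<not> (a = tp h \<and> b = tp (h - 1))"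
  shows "nonmultiple K (enc_right K tp h - a) \<or> nonmultiple K (enc_left K tp h - b)"
proof -
  have fs: "finite_support tp" using tm_run_ok[OF wf, of w t] assms(1) by (simp add: tm_config_ok_def)
  obtain m0 :: nat where m0: "enc_right K tp h = tp h + K * m0" using enc_right_digit[OF fs] .
  obtain m1 :: nat where m1: "enc_left K tp h = tp (h - 1) + K * m1" using enc_left_digit[OF fs] .
  have "a \<noteq> tp h \<Longrightarrow> nonmultiple K (real (tp h) + real K * real m0 - real a)"
    using assms(2) tm_run_cell_less[OF assms(1)] by (rule nonmultiple_wrong_digit)
  moreover have "b \<noteq> tp (h - 1) \<Longrightarrow> nonmultiple K (real (tp (h - 1)) + real K * real m1 - real b)"
    using assms(3) tm_run_cell_less[OF assms(1)] by (rule nonmultiple_wrong_digit)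
  ultimately show ?thesis using assms(4) by (auto simp: m0 m1)
qed

definition encodes_config :: "'a list \<Rightarrow> nat \<Rightarrow> real \<Rightarrow> real \<Rightarrow> bool" where
  "encodes_config w q x0 x1 \<longleftrightarrow>
     (\<exists>t h tp. tm_run M w t = (q, h, tp) \<and> x0 = enc_right K tp h \<and> x1 = enc_left K tp h)"

definition encodes_claimed_config :: "'a list \<Rightarrow> nat \<Rightarrow> nat \<Rightarrow> nat \<Rightarrow> real \<Rightarrow> real \<Rightarrow> bool" where
  "encodes_claimed_config w q a b x0 x1 \<longleftrightarrow>
     (\<exists>t h tp. tm_run M w t = (q, h, tp) \<and> q \<noteq> tm_rej M \<and> a = tp h \<and> b = tp (h - 1) \<and>
        x0 = enc_right K tp h - a \<and> x1 = enc_left K tp h - b)"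

(* eps on configurations of the honest simulation, 4/3 eps after a wrong announcement has passed
   unnoticed and 2/3 eps during a check that is bound to expose one; after a wrong announcement the
   fair coin averages the last two back to eps. *)
definition sound_bound :: "'a list \<Rightarrow> vstate \<Rightarrow> nat \<Rightarrow> real \<Rightarrow> real \<Rightarrow> real \<Rightarrow> real" where
  "sound_bound w X p x0 x1 x2 = (case X of
      Accept \<Rightarrow> 1
    | Reject \<Rightarrow> 0
    | ToEnd \<Rightarrow> \<epsilon>
    | Load \<Rightarrow> if x0 = enc_right K (input_tape M w) (int p) \<and> x1 = 0 \<and> x2 = 1/2 then \<epsilon> else 4/3 * \<epsilon>
    | Sim q \<Rightarrow> if x2 = 1/2 \<and> encodes_config w q x0 x1 then \<epsilon> else 4/3 * \<epsilon>
    | Step q a b \<Rightarrow> if encodes_claimed_config w q a b x0 x1 then \<epsilon> else 4/3 * \<epsilon>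
    | CheckR \<Rightarrow> if nonmultiple K x0 \<or> nonmultiple K x1 then 2/3 * \<epsilon> else \<epsilon>
    | CheckL \<Rightarrow> if nonmultiple K x1 then 2/3 * \<epsilon> else \<epsilon>)"

lemma sound_bound_nonneg: "0 \<le> sound_bound w X p x0 x1 x2"
  using eps_pos by (cases X) (simp_all add: sound_bound_def)

lemma sound_bound_le: "X \<noteq> Accept \<Longrightarrow> sound_bound w X p x0 x1 x2 \<le> 4/3 * \<epsilon>"
  using eps_pos by (cases X) (simp_all add: sound_bound_def)

lemma sound_bound_Check_le: "X \<in> {CheckR, CheckL} \<Longrightarrow> sound_bound w X p x0 x1 x2 \<le> \<epsilon>"
  using eps_pos by (auto simp: sound_bound_def)

context
  fixes w :: "'a list" and F :: "nat \<Rightarrow> nat \<Rightarrow> real list list \<Rightarrow> history \<Rightarrow> real"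
  assumes rejects: "\<not> tm_accepts M w"
    and F_le: "\<And>X p x0 x1 x2 x3 h os. valid X \<Longrightarrow> (X \<notin> {Accept, Reject, ToEnd} \<Longrightarrow> x3 = \<alpha>) \<Longrightarrow>
      succ_value F X p (regs4 x0 x1 x2 x3) h os \<le> sound_bound w X p x0 x1 x2"
begin

lemma succ_value_Reject_le: "succ_value F Reject p (regs4 x0 x1 x2 x3) h os \<le> 0"
  using F_le[of Reject] by (simp add: valid_vstate_def sound_bound_def)

lemma sound_step_ToEnd: "expected_next V P w F (E ToEnd) p (regs4 x0 x1 x2 x3) h \<le> \<epsilon>"
proof (cases "tape w p = REnd")
  case True
  have "succ_value F Load (p - 1) (regs4 0 0 (1/2) \<alpha>) h (no_outcome V) \<le> sound_bound w Load (p - 1) 0 0 (1/2)"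
    by (rule F_le) (simp_all add: valid_vstate_def)
  also have "\<dots> = \<epsilon>"
    using True enc_right_input_tape_beyond[of w "p - 1"] by (simp add: sound_bound_def tape_REnd_iff)
  finally show ?thesis using True by (simp add: expected_next_ToEnd)
next
  case False
  have "succ_value F ToEnd (Suc p) (regs4 0 0 (1/2) \<alpha>) h (no_outcome V) \<le> sound_bound w ToEnd (Suc p) 0 0 (1/2)"
    by (rule F_le) (simp_all add: valid_vstate_def)
  then show ?thesis using False by (simp add: expected_next_ToEnd sound_bound_def)
qed

lemma succ_value_le_four_thirds:
  "valid X \<Longrightarrow> X \<noteq> Accept \<Longrightarrow> (X \<notin> {Accept, Reject, ToEnd} \<Longrightarrow> x3 = \<alpha>) \<Longrightarrow>
   succ_value F X p (regs4 x0 x1 x2 x3) h os \<le> 4/3 * \<epsilon>"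
  by (rule order.trans[OF F_le sound_bound_le])

lemma sound_step_Load:
  "expected_next V P w F (E Load) p (regs4 x0 x1 x2 \<alpha>) h \<le> sound_bound w Load p x0 x1 x2"
proof (cases "x0 = enc_right K (input_tape M w) (int p) \<and> x1 = 0 \<and> x2 = 1/2")
  case True
  then have x: "x0 = enc_right K (input_tape M w) (int p)" "x1 = 0" "x2 = 1/2" by auto
  let ?x = "\<lambda>p. enc_right K (input_tape M w) (int p)"
  have "expected_next V P w F (E Load) p (regs4 (?x p) 0 (1/2) \<alpha>) h \<le> \<epsilon>"
  proof (cases p)
    case 0
    then have "tape w p = LEnd" by (simp add: tape_def)
    have "succ_value F (Sim (tm_start M)) p (regs4 (?x p) 0 (1/2) \<alpha>) h (no_outcome V) \<le>
        sound_bound w (Sim (tm_start M)) p (?x p) 0 (1/2)"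
      by (rule F_le) (simp_all add: valid_vstate_def tm_start_less)
    moreover have "encodes_config w (tm_start M) (?x p) 0"
      unfolding encodes_config_def using 0 tm_run_0 enc_left_input_tape_start by fastforce
    ultimately show ?thesis using \<open>tape w p = LEnd\<close> by (simp add: expected_next_Load sound_bound_def)
  next
    case (Suc p')
    have "succ_value F Load p' (regs4 (?x p') 0 (1/2) \<alpha>) h (no_outcome V) \<le> sound_bound w Load p' (?x p') 0 (1/2)"
      by (rule F_le) (simp_all add: valid_vstate_def)
    then show ?thesis unfolding Suc expected_next_Load_input by (simp add: sound_bound_def)
  qed
  then show ?thesis unfolding x by (simp add: sound_bound_def)
next
  case False
  have "expected_next V P w F (E Load) p (regs4 x0 x1 x2 \<alpha>) h \<le> 4/3 * \<epsilon>"
    by (cases "tape w p"; simp only: expected_next_Load tsym.case;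
        rule succ_value_le_four_thirds; simp add: tm_start_less valid_vstate_def)
  then show ?thesis by (simp only: sound_bound_def vstate.case False if_False)
qed

lemma sound_step_CheckR:
  "expected_next V P w F (E CheckR) p (regs4 x0 x1 x2 \<alpha>) h \<le> sound_bound w CheckR p x0 x1 x2"
proof (cases "P w h = 0")
  case True
  have "succ_value F CheckL p (regs4 0 x1 x2 \<alpha>) h (weigh_outcome V 0 0) \<le> sound_bound w CheckL p 0 x1 x2"
    by (rule F_le) (simp_all add: valid_vstate_def)
  then have "expected_next V P w F (E CheckR) p (regs4 x0 x1 x2 \<alpha>) h \<le>
      weigh_prob x0 0 * sound_bound w CheckL p 0 x1 x2 + weigh_prob x0 1 * 0"
    unfolding expected_next_CheckR_stop[of P w h, OF True] by (intro weigh_mix_le succ_value_Reject_le)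
  also have "\<dots> \<le> sound_bound w CheckR p x0 x1 x2"
    using nonmultiple_weigh_prob[of K x0] weigh_prob_nonneg[of x0 0] weigh_prob_sum[of x0]
      weigh_prob_nonneg[of x0 1] eps_pos
    by (auto simp: sound_bound_def intro: mult_mono' order.trans[OF mult_right_mono])
  finally show ?thesis .
next
  case False
  have "succ_value F CheckR p (regs4 (x0 - K) x1 x2 \<alpha>) h (no_outcome V) \<le> sound_bound w CheckR p (x0 - K) x1 x2"
    by (rule F_le) (simp_all add: valid_vstate_def)
  also have "\<dots> \<le> sound_bound w CheckR p x0 x1 x2"
    using nonmultiple_diff[of K x0] eps_pos by (auto simp: sound_bound_def)
  finally show ?thesis by (simp add: expected_next_CheckR_continue[of P w h, OF False])
qed

lemma sound_step_CheckL:
  "expected_next V P w F (E CheckL) p (regs4 x0 x1 x2 \<alpha>) h \<le> sound_bound w CheckL p x0 x1 x2"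
proof (cases "P w h = 0")
  case True
  have "succ_value F ToEnd p (regs4 x0 0 x2 \<alpha>) h (weigh_outcome V 1 0) \<le> sound_bound w ToEnd p x0 0 x2"
    by (rule F_le) (simp_all add: valid_vstate_def)
  then have "expected_next V P w F (E CheckL) p (regs4 x0 x1 x2 \<alpha>) h \<le> weigh_prob x1 0 * \<epsilon> + weigh_prob x1 1 * 0"
    unfolding expected_next_CheckL_stop[of P w h, OF True]
    by (intro weigh_mix_le succ_value_Reject_le) (simp add: sound_bound_def)
  also have "\<dots> \<le> sound_bound w CheckL p x0 x1 x2"
    using nonmultiple_weigh_prob[of K x1] weigh_prob_sum[of x1] weigh_prob_nonneg[of x1 1] eps_pos
    by (auto simp: sound_bound_def)
  finally show ?thesis .
next
  case False
  have "succ_value F CheckL p (regs4 x0 (x1 - K) x2 \<alpha>) h (no_outcome V) \<le> sound_bound w CheckL p x0 (x1 - K) x2"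
    by (rule F_le) (simp_all add: valid_vstate_def)
  also have "\<dots> \<le> sound_bound w CheckL p x0 x1 x2"
    using nonmultiple_diff[of K x1] eps_pos by (auto simp: sound_bound_def)
  finally show ?thesis by (simp add: expected_next_CheckL_continue[of P w h, OF False])
qed

lemma sound_step_Step:
  assumes "valid (Step q a b)"
  shows "expected_next V P w F (E (Step q a b)) p (regs4 x0 x1 x2 \<alpha>) h \<le> sound_bound w (Step q a b) p x0 x1 x2"
proof -
  have q: "q < N" "a < K" "b < K" using assms by (simp_all add: valid_vstate_def)
  obtain q' s d where delta: "tm_delta M q a = (q', s, d)" by (cases "tm_delta M q a") auto
  let ?y0 = "aff_apply (right_update K d s b) x0" and ?y1 = "aff_apply (left_update K d s b) x1"
  show ?thesis
  proof (cases "q' < N \<and> d \<in> {-1, 0, 1}")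
    case True
    have "succ_value F (Sim q') p (regs4 ?y0 ?y1 (1/2) \<alpha>) h (no_outcome V) \<le> sound_bound w (Sim q') p ?y0 ?y1 (1/2)"
      by (rule F_le) (use True in \<open>simp_all add: valid_vstate_def\<close>)
    also have "\<dots> \<le> sound_bound w (Step q a b) p x0 x1 x2"
    proof (cases "encodes_claimed_config w q a b x0 x1")
      case True
      then obtain t hp tp where run: "tm_run M w t = (q, hp, tp)" and "q \<noteq> tm_rej M"
        and claim: "a = tp hp" "b = tp (hp - 1)" "x0 = enc_right K tp hp - a" "x1 = enc_left K tp hp - b"
        unfolding encodes_claimed_config_def by blast
      have "q \<noteq> tm_acc M" using rejects run by (metis fst_conv tm_accepts_iff_run)
      note step = tm_run_step[OF wf run this \<open>q \<noteq> tm_rej M\<close> delta[unfolded claim(1)]]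
      have fs: "finite_support tp" using tm_run_ok[OF wf, of w t] run by (simp add: tm_config_ok_def)
      have "encodes_config w q' ?y0 ?y1"
        unfolding encodes_config_def claim using step(3) enc_write_move[OF fs K_pos step(2)] by blast
      then show ?thesis using True eps_pos by (simp add: sound_bound_def)
    next
      case False
      then show ?thesis using sound_bound_le[of "Sim q'" w p ?y0 ?y1 "1/2"] by (simp add: sound_bound_def)
    qed
    finally show ?thesis using True q delta by (simp add: expected_next_Step)
  next
    case False
    show ?thesis
      unfolding expected_next_Step[OF q delta] if_not_P[OF False]
      by (rule order.trans[OF succ_value_Reject_le sound_bound_nonneg])
  qed
qed

lemma sound_step_Sim_accept:
  "expected_next V P w F (E (Sim (tm_acc M))) p (regs4 x0 x1 x2 \<alpha>) h \<le> sound_bound w (Sim (tm_acc M)) p x0 x1 x2"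
proof -
  define c where "c = P w h"
  let ?y0 = "x0 - real (c mod K)" and ?y1 = "x1 - real (c div K mod K)"
  have "\<not> encodes_config w (tm_acc M) x0 x1"
    using rejects unfolding encodes_config_def tm_accepts_iff_run by (metis fst_conv)
  then have bound: "sound_bound w (Sim (tm_acc M)) p x0 x1 x2 = 4/3 * \<epsilon>" by (simp add: sound_bound_def)
  have "succ_value F ToEnd p (regs4 ?y0 ?y1 x2 0) h (weigh_outcome V 3 0) \<le> sound_bound w ToEnd p ?y0 ?y1 x2"
    by (rule F_le) (simp_all add: valid_vstate_def)
  moreover have "succ_value F Accept p (regs4 ?y0 ?y1 x2 1) h (weigh_outcome V 3 1) \<le> sound_bound w Accept p ?y0 ?y1 x2"
    by (rule F_le) (simp_all add: valid_vstate_def)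
  ultimately have "expected_next V P w F (E (Sim (tm_acc M))) p (regs4 x0 x1 x2 \<alpha>) h \<le>
      weigh_prob \<alpha> 0 * \<epsilon> + weigh_prob \<alpha> 1 * 1"
    unfolding expected_next_Sim_acc[of P w h c, OF c_def[symmetric]] by (intro weigh_mix_le) (simp_all add: sound_bound_def)
  also have "\<dots> = (1 - \<alpha>) * \<epsilon> + \<alpha>"
    using weigh_prob_unit_interval[of \<alpha>] eps_pos eps_less by simp
  also have "\<dots> \<le> 4/3 * \<epsilon>" using eps_pos by (simp add: algebra_simps)
  finally show ?thesis unfolding bound .
qed

lemma sound_step_Sim_running:
  assumes "q < N" "q \<noteq> tm_acc M" "q \<noteq> tm_rej M"
  obtains a b where "a < K" "b < K"
    and "expected_next V P w F (E (Sim q)) p (regs4 x0 x1 x2 \<alpha>) h \<le>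
      weigh_prob x2 0 * sound_bound w (Step q a b) p (x0 - a) (x1 - b) 0 +
      weigh_prob x2 1 * sound_bound w CheckR p (x0 - a) (x1 - b) 1"
proof -
  define c where "c = P w h"
  define a b where "a = c mod K" and "b = c div K mod K"
  have ab: "a < K" "b < K" using K_pos by (simp_all add: a_def b_def)
  have "succ_value F (Step q a b) p (regs4 (x0 - a) (x1 - b) 0 \<alpha>) h (weigh_outcome V 2 0) \<le>
      sound_bound w (Step q a b) p (x0 - a) (x1 - b) 0"
    by (rule F_le) (use assms(1) ab in \<open>simp_all add: valid_vstate_def\<close>)
  moreover have "succ_value F CheckR p (regs4 (x0 - a) (x1 - b) 1 \<alpha>) h (weigh_outcome V 2 1) \<le>
      sound_bound w CheckR p (x0 - a) (x1 - b) 1"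
    by (rule F_le) (simp_all add: valid_vstate_def)
  ultimately show ?thesis
    using that[OF ab] unfolding expected_next_Sim[of q P w h c, OF assms c_def[symmetric]] a_def b_def
    by (blast intro: weigh_mix_le)
qed

lemma sound_step_Sim_encoded:
  assumes run: "tm_run M w t = (q, hp, tp)" and "q < N" "q \<noteq> tm_rej M"
  shows "expected_next V P w F (E (Sim q)) p (regs4 (enc_right K tp hp) (enc_left K tp hp) (1/2) \<alpha>) h \<le> \<epsilon>"
proof -
  have "q \<noteq> tm_acc M" using rejects run unfolding tm_accepts_iff_run by (metis fst_conv)
  then obtain a b where ab: "a < K" "b < K" and step:
    "expected_next V P w F (E (Sim q)) p (regs4 (enc_right K tp hp) (enc_left K tp hp) (1/2) \<alpha>) h \<le>
      weigh_prob (1/2) 0 * sound_bound w (Step q a b) p (enc_right K tp hp - a) (enc_left K tp hp - b) 0 +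
      weigh_prob (1/2) 1 * sound_bound w CheckR p (enc_right K tp hp - a) (enc_left K tp hp - b) 1"
    by (rule sound_step_Sim_running[OF assms(2) _ assms(3)])
  have half: "weigh_prob (1/2) 0 = 1/2" "weigh_prob (1/2) 1 = 1/2"
    using weigh_prob_unit_interval[of "1/2"] by simp_all
  show ?thesis
  proof (cases "a = tp hp \<and> b = tp (hp - 1)")
    case True
    then have "encodes_claimed_config w q a b (enc_right K tp hp - a) (enc_left K tp hp - b)"
      unfolding encodes_claimed_config_def using run assms(3) by blast
    then have "sound_bound w (Step q a b) p (enc_right K tp hp - a) (enc_left K tp hp - b) 0 = \<epsilon>"
      by (simp add: sound_bound_def)
    with step[unfolded half] sound_bound_Check_le[of CheckR w p "enc_right K tp hp - a" "enc_left K tp hp - b" 1]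
    show ?thesis by simp
  next
    case False
    then have "nonmultiple K (enc_right K tp hp - a) \<or> nonmultiple K (enc_left K tp hp - b)"
      using wrong_claim_nonmultiple[OF run ab] by simp
    then have "sound_bound w CheckR p (enc_right K tp hp - a) (enc_left K tp hp - b) 1 = 2/3 * \<epsilon>"
      by (simp add: sound_bound_def)
    with step[unfolded half] sound_bound_le[of "Step q a b" w p "enc_right K tp hp - a" "enc_left K tp hp - b" 0]
    show ?thesis by simp
  qed
qed

lemma sound_step_Sim:
  assumes "q < N"
  shows "expected_next V P w F (E (Sim q)) p (regs4 x0 x1 x2 \<alpha>) h \<le> sound_bound w (Sim q) p x0 x1 x2"
proof -
  consider "q = tm_acc M" | "q = tm_rej M" | "q \<noteq> tm_acc M" "q \<noteq> tm_rej M" by blast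
  then show ?thesis
  proof cases
    case 1
    then show ?thesis using sound_step_Sim_accept by simp
  next
    case 2
    then show ?thesis
      using succ_value_Reject_le order.trans[OF _ sound_bound_nonneg] by (simp add: expected_next_Sim_rej)
  next
    case 3
    show ?thesis
    proof (cases "x2 = 1/2 \<and> encodes_config w q x0 x1")
      case True
      then obtain t hp tp where run: "tm_run M w t = (q, hp, tp)"
        and x: "x0 = enc_right K tp hp" "x1 = enc_left K tp hp" "x2 = 1/2"
        unfolding encodes_config_def by blast
      have "encodes_config w q (enc_right K tp hp) (enc_left K tp hp)" using True x by simp
      then show ?thesis
        unfolding x using sound_step_Sim_encoded[OF run assms 3(2)] by (simp add: sound_bound_def)
    next
      case False
      obtain a b where
        "expected_next V P w F (E (Sim q)) p (regs4 x0 x1 x2 \<alpha>) h \<le>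
          weigh_prob x2 0 * sound_bound w (Step q a b) p (x0 - a) (x1 - b) 0 +
          weigh_prob x2 1 * sound_bound w CheckR p (x0 - a) (x1 - b) 1"
        using sound_step_Sim_running[OF assms 3] by blast
      also have "\<dots> \<le> 4/3 * \<epsilon>" by (intro weigh_mix_le_const sound_bound_le) simp_all
      finally show ?thesis using False by (simp only: sound_bound_def vstate.case if_False)
    qed
  qed
qed

lemma sound_step:
  assumes "valid X" "X \<noteq> Accept" "X \<noteq> Reject" "X \<notin> {Accept, Reject, ToEnd} \<Longrightarrow> x3 = \<alpha>"
  shows "expected_next V P w F (E X) p (regs4 x0 x1 x2 x3) h \<le> sound_bound w X p x0 x1 x2"
proof (cases X)
  case ToEnd
  then show ?thesis using sound_step_ToEnd by (simp add: sound_bound_def)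
qed (use assms sound_step_Load sound_step_CheckR sound_step_CheckL sound_step_Sim sound_step_Step
  in \<open>auto simp: valid_vstate_def\<close>)

end

definition sound_inv :: "nat \<Rightarrow> nat \<Rightarrow> real list list \<Rightarrow> history \<Rightarrow> bool" where
  "sound_inv q p regs h \<longleftrightarrow> (\<exists>X x0 x1 x2 x3. q = E X \<and> valid X \<and> regs = regs4 x0 x1 x2 x3 \<and>
     (X \<notin> {Accept, Reject, ToEnd} \<longrightarrow> x3 = \<alpha>))"

definition sound_potential :: "'a list \<Rightarrow> nat \<Rightarrow> nat \<Rightarrow> real list list \<Rightarrow> history \<Rightarrow> real" where
  "sound_potential w q p regs h = sound_bound w (dec_vstate N K q) p (regs ! 0 ! 1) (regs ! 1 ! 1) (regs ! 2 ! 1)"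

lemma enc_vstate_accs_rejs: "E X = accs V \<longleftrightarrow> X = Accept" "E X = rejs V \<longleftrightarrow> X = Reject"
  by (cases X; simp add: enc_vstate_def verifier_def)+

lemma sound_potential_regs4:
  "valid X \<Longrightarrow> sound_potential w (E X) p (regs4 x0 x1 x2 x3) h = sound_bound w X p x0 x1 x2"
  by (simp add: sound_potential_def dec_enc_vstate affine_pair_def)

lemma sound_potential_step:
  assumes "\<not> tm_accepts M w" "sound_inv q p regs h" "q \<noteq> accs V" "q \<noteq> rejs V"
    and F: "\<And>q' p' regs' h'. sound_inv q' p' regs' h' \<Longrightarrow> F q' p' regs' h' \<le> sound_potential w q' p' regs' h'"
  shows "expected_next V P w F q p regs h \<le> sound_potential w q p regs h"
proof -
  from assms(2) obtain X x0 x1 x2 x3 where X: "q = E X" "valid X" "regs = regs4 x0 x1 x2 x3"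
    "X \<notin> {Accept, Reject, ToEnd} \<longrightarrow> x3 = \<alpha>"
    unfolding sound_inv_def by blast
  have F_le: "succ_value F X' p' (regs4 y0 y1 y2 y3) h' os \<le> sound_bound w X' p' y0 y1 y2"
    if "valid X'" "X' \<notin> {Accept, Reject, ToEnd} \<Longrightarrow> y3 = \<alpha>" for X' p' y0 y1 y2 y3 h' os
    using F[of "E X'" p' "regs4 y0 y1 y2 y3"] that unfolding succ_value_def sound_inv_def
    by (auto simp: sound_potential_regs4)
  show ?thesis
    using sound_step[OF assms(1) F_le X(2)] X assms(3,4) by (simp add: sound_potential_regs4 enc_vstate_accs_rejs)
qed

lemma acc_within_le_eps:
  assumes "\<not> tm_accepts M w"
  shows "acc_within V P w n (start V) 0 (init_regs V) [] \<le> \<epsilon>"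
proof -
  have "acc_within V P w n (E ToEnd) 0 (regs4 0 0 0 0) [] \<le> sound_potential w (E ToEnd) 0 (regs4 0 0 0 0) []"
  proof (rule acc_within_le_potential[where Inv = sound_inv])
    fix q p regs h assume "sound_inv q p regs h"
    then obtain X x0 x1 x2 x3 where "q = E X" "valid X" "regs = regs4 x0 x1 x2 x3"
      unfolding sound_inv_def by blast
    then show "0 \<le> sound_potential w q p regs h" by (simp add: sound_potential_regs4 sound_bound_nonneg)
  next
    fix p regs h assume "sound_inv (accs V) p regs h"
    then obtain X x0 x1 x2 x3 where X: "accs V = E X" "valid X" "regs = regs4 x0 x1 x2 x3"
      unfolding sound_inv_def by blast
    then have "X = Accept" using enc_vstate_accs_rejs(1) by metis
    with X show "1 \<le> sound_potential w (accs V) p regs h" by (simp add: sound_potential_regs4 sound_bound_def)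
  next
    show "sound_inv (E ToEnd) 0 (regs4 0 0 0 0) []" unfolding sound_inv_def by (auto simp: valid_vstate_def)
  qed (rule sound_potential_step[OF assms])
  then show ?thesis
    by (simp add: verifier_initial sound_potential_regs4 sound_bound_def valid_vstate_def)
qed

lemma accept_prob_le_eps: "\<not> tm_accepts M w \<Longrightarrow> accept_prob V P w \<le> \<epsilon>"
  unfolding accept_prob_def by (rule cSUP_least) (simp_all add: acc_within_le_eps)

section \<open>Completeness\<close>

lemma expected_next_Sim_le_one:
  assumes "q < N"
    and F_le: "\<And>X' p' y0 y1 y2 y3 h' os. valid X' \<Longrightarrow> succ_value F X' p' (regs4 y0 y1 y2 y3) h' os \<le> 1"
  shows "expected_next V P w F (E (Sim q)) p (regs4 x0 x1 x2 x3) h \<le> 1"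
proof -
  consider "q = tm_acc M" | "q = tm_rej M" | "q \<noteq> tm_acc M" "q \<noteq> tm_rej M" by blast
  then show ?thesis
  proof cases
    case 1
    show ?thesis unfolding 1 expected_next_Sim_acc[OF refl]
      by (intro weigh_mix_le_const F_le) (simp_all add: valid_vstate_def)
  next
    case 2
    show ?thesis unfolding 2 expected_next_Sim_rej[OF refl] by (simp add: F_le valid_vstate_def)
  next
    case 3
    show ?thesis unfolding expected_next_Sim[OF assms(1) 3 refl]
      using assms(1) K_pos by (intro weigh_mix_le_const F_le) (simp_all add: valid_vstate_def)
  qed
qed

lemma expected_next_le_one:
  assumes "valid X" "X \<noteq> Accept" "X \<noteq> Reject"
    and F_le: "\<And>X' p' y0 y1 y2 y3 h' os. valid X' \<Longrightarrow> succ_value F X' p' (regs4 y0 y1 y2 y3) h' os \<le> 1"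
  shows "expected_next V P w F (E X) p (regs4 x0 x1 x2 x3) h \<le> 1"
proof (cases X)
  case ToEnd
  then show ?thesis by (simp add: expected_next_ToEnd F_le valid_vstate_def)
next
  case Load
  then show ?thesis
    by (cases "tape w p") (simp_all add: expected_next_Load F_le valid_vstate_def tm_start_less)
next
  case CheckR
  show ?thesis
  proof (cases "P w h = 0")
    case True
    show ?thesis unfolding CheckR expected_next_CheckR_stop[of P w h, OF True]
      by (intro weigh_mix_le_const F_le) (simp_all add: valid_vstate_def)
  qed (simp add: CheckR expected_next_CheckR_continue F_le valid_vstate_def)
next
  case CheckL
  show ?thesis
  proof (cases "P w h = 0")
    case True
    show ?thesis unfolding CheckL expected_next_CheckL_stop[of P w h, OF True]
      by (intro weigh_mix_le_const F_le) (simp_all add: valid_vstate_def)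
  qed (simp add: CheckL expected_next_CheckL_continue F_le valid_vstate_def)
next
  case (Sim q)
  then show ?thesis using assms(1) expected_next_Sim_le_one F_le by (simp add: valid_vstate_def)
next
  case (Step q a b)
  obtain q' s d where "tm_delta M q a = (q', s, d)" by (cases "tm_delta M q a") auto
  then show ?thesis
    using Step assms(1) by (simp add: expected_next_Step F_le valid_vstate_def)
qed (use assms in auto)

lemma acc_within_le_one: "valid X \<Longrightarrow> acc_within V P w n (E X) p (regs4 x0 x1 x2 x3) h \<le> 1"
proof (rule acc_within_le_potential[where \<Phi> = "\<lambda>_ _ _ _. 1"
      and Inv = "\<lambda>q p regs h. \<exists>X x0 x1 x2 x3. q = E X \<and> valid X \<and> regs = regs4 x0 x1 x2 x3"])
  fix F :: "nat \<Rightarrow> nat \<Rightarrow> real list list \<Rightarrow> history \<Rightarrow> real" and q p regs h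
  assume "\<exists>X x0 x1 x2 x3. q = E X \<and> valid X \<and> regs = regs4 x0 x1 x2 x3" "q \<noteq> accs V" "q \<noteq> rejs V"
    and F: "\<And>q' p' regs' h'. \<exists>X x0 x1 x2 x3. q' = E X \<and> valid X \<and> regs' = regs4 x0 x1 x2 x3 \<Longrightarrow>
      F q' p' regs' h' \<le> 1"
  then obtain X x0 x1 x2 x3 where "q = E X" "valid X" "regs = regs4 x0 x1 x2 x3" "X \<noteq> Accept" "X \<noteq> Reject"
    using enc_vstate_accs_rejs by blast
  moreover have "succ_value F X' p' (regs4 y0 y1 y2 y3) h' os \<le> 1" if "valid X'" for X' p' y0 y1 y2 y3 h' os
    unfolding succ_value_def using that by (intro F) blast
  ultimately show "expected_next V P w F q p regs h \<le> 1" by (simp add: expected_next_le_one)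
qed auto

definition honest_answer :: "vstate \<Rightarrow> real list list \<Rightarrow> nat" where
  "honest_answer X regs = (case X of
      Sim q \<Rightarrow> nat (\<lfloor>regs ! 0 ! 1\<rfloor> mod int K) + K * nat (\<lfloor>regs ! 1 ! 1\<rfloor> mod int K)
    | CheckR \<Rightarrow> if regs ! 0 ! 1 = 0 then 0 else 1
    | CheckL \<Rightarrow> if regs ! 1 ! 1 = 0 then 0 else 1
    | _ \<Rightarrow> 0)"

definition honest_prover :: "'a prover" where
  "honest_prover = replay_prover V (\<lambda>q. honest_answer (dec_vstate N K q))"

definition prover_tracks :: "'a list \<Rightarrow> vstate \<Rightarrow> nat \<Rightarrow> real list list \<Rightarrow> history \<Rightarrow> bool" where
  "prover_tracks w X p regs h \<longleftrightarrow> replay V (\<lambda>q. honest_answer (dec_vstate N K q)) w (rev h) = (E X, p, regs)"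

lemma honest_prover_tracks: "prover_tracks w X p regs h \<Longrightarrow> valid X \<Longrightarrow> honest_prover w h = honest_answer X regs"
  by (simp add: prover_tracks_def honest_prover_def replay_prover_eq dec_enc_vstate)

lemma prover_tracks_snoc:
  "prover_tracks w X p regs h \<Longrightarrow> update_regs V (E X) (tape w p) (honest_prover w h) regs os = regs' \<Longrightarrow>
   prover_tracks w X' p' regs' (h @ [(E X', p', os)])"
  unfolding prover_tracks_def honest_prover_def by (metis replay_snoc)

lemma honest_answer_less: "honest_answer X regs < K * K"
proof -
  have digit: "nat (i mod int K) < K" for i using K_pos by (simp add: nat_less_iff)
  have sum: "nat (i mod int K) + K * nat (j mod int K) < K * K" for i j
  proof -
    have "nat (i mod int K) + K * nat (j mod int K) < K * Suc (nat (j mod int K))" using digit[of i] by simp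
    also have "\<dots> \<le> K * K" using digit[of j] by (intro mult_le_mono2) simp
    finally show ?thesis .
  qed
  have "1 < K * K" using K_pos wf by (simp add: base_def wf_tm_def)
  then show ?thesis
  proof (cases X)
    case (Sim q)
    then show ?thesis using sum by (simp only: honest_answer_def vstate.case)
  qed (simp_all add: honest_answer_def K_pos)
qed

lemma valid_honest_prover: "valid_prover V honest_prover"
  unfolding honest_prover_def
  by (rule valid_replay_prover) (simp add: verifier_def honest_answer_less)

lemma honest_answer_Sim:
  assumes "tm_run M w t = (q, hp, tp)"
  shows "honest_answer (Sim q) (regs4 (enc_right K tp hp) (enc_left K tp hp) x2 x3) = tp hp + K * tp (hp - 1)"
proof -
  have fs: "finite_support tp" using tm_run_ok[OF wf, of w t] assms by (simp add: tm_config_ok_def)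
  obtain m0 :: nat where m0: "enc_right K tp hp = tp hp + K * m0" using enc_right_digit[OF fs] .
  obtain m1 :: nat where m1: "enc_left K tp hp = tp (hp - 1) + K * m1" using enc_left_digit[OF fs] .
  have digit: "nat (\<lfloor>real (v + K * m)\<rfloor> mod int K) = v" if "v < K" for v m
  proof -
    have "\<lfloor>real (v + K * m)\<rfloor> mod int K = int ((v + K * m) mod K)"
      by (simp only: floor_of_nat of_nat_mod)
    with that show ?thesis by simp
  qed
  have "enc_right K tp hp = real (tp hp + K * m0)" "enc_left K tp hp = real (tp (hp - 1) + K * m1)"
    using m0 m1 by simp_all
  then show ?thesis
    using tm_run_cell_less[OF assms] digit unfolding honest_answer_def affine_pair_def by simp
qed

definition eventually_accepts :: "'a list \<Rightarrow> real \<Rightarrow> vstate \<Rightarrow> nat \<Rightarrow> real list list \<Rightarrow> history \<Rightarrow> bool" where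
  "eventually_accepts w \<nu> X p regs h \<longleftrightarrow>
     (\<forall>\<^sub>F n in sequentially. \<nu> \<le> acc_within V honest_prover w n (E X) p regs h)"

lemma eventually_acceptsI:
  assumes "X \<noteq> Accept" "X \<noteq> Reject"
    and "\<forall>\<^sub>F n in sequentially. \<nu> \<le> expected_next V honest_prover w (acc_within V honest_prover w n) (E X) p regs h"
  shows "eventually_accepts w \<nu> X p regs h"
  unfolding eventually_accepts_def
  using assms enc_vstate_accs_rejs by (intro eventually_acc_within_SucI) auto

lemma eventually_accepts_succ_value:
  "eventually_accepts w \<nu> X p regs (h @ [(E X, p, os)]) \<Longrightarrow>
   \<forall>\<^sub>F n in sequentially. \<nu> \<le> succ_value (acc_within V honest_prover w n) X p regs h os"
  by (simp add: eventually_accepts_def succ_value_def)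

lemma succ_value_acc_within_Accept: "succ_value (acc_within V P w n) Accept p regs h os = 1"
  using enc_vstate_accs_rejs(1)[of Accept] by (simp add: succ_value_def)

lemma succ_value_acc_within_Reject: "succ_value (acc_within V P w n) Reject p regs h os = 0"
proof -
  have "rejs V \<noteq> accs V" by (simp add: verifier_def)
  with enc_vstate_accs_rejs(2)[of Reject] show ?thesis by (simp add: succ_value_def)
qed

context
  fixes w :: "'a list" and \<nu> :: real
  assumes restart: "\<And>p x0 x1 x2 x3 h. prover_tracks w ToEnd p (regs4 x0 x1 x2 x3) h \<Longrightarrow>
    eventually_accepts w \<nu> ToEnd p (regs4 x0 x1 x2 x3) h"
begin

lemma eventually_accepts_CheckL:
  "prover_tracks w CheckL p (regs4 x0 (real (K * Q)) x2 x3) h \<Longrightarrow>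
   eventually_accepts w \<nu> CheckL p (regs4 x0 (real (K * Q)) x2 x3) h"
proof (induction Q arbitrary: h)
  case 0
  have c: "honest_prover w h = 0"
    using honest_prover_tracks[OF 0] by (simp add: honest_answer_def valid_vstate_def affine_pair_def)
  have "prover_tracks w ToEnd p (regs4 x0 0 x2 x3) (h @ [(E ToEnd, p, weigh_outcome V 1 0)])"
    using 0 by (rule prover_tracks_snoc) (simp add: c verifier_step_simps)
  then have "\<forall>\<^sub>F n in sequentially.
      \<nu> \<le> succ_value (acc_within V honest_prover w n) ToEnd p (regs4 x0 0 x2 x3) h (weigh_outcome V 1 0)"
    by (intro eventually_accepts_succ_value restart)
  then show ?case
    by (intro eventually_acceptsI)
      (simp_all add: expected_next_CheckL_stop[of honest_prover w h, OF c] weigh_prob_unit_interval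
        succ_value_acc_within_Reject)
next
  case (Suc Q)
  have "0 < real K" "0 \<le> real K * real Q" using K_pos by simp_all
  then have "real K + real K * real Q \<noteq> 0" by linarith
  then have c: "honest_prover w h \<noteq> 0"
    using honest_prover_tracks[OF Suc.prems] by (simp add: honest_answer_def valid_vstate_def affine_pair_def)
  have x1: "real (K * Suc Q) - real K = real (K * Q)" by (simp add: algebra_simps)
  have "prover_tracks w CheckL p (regs4 x0 (real (K * Q)) x2 x3) (h @ [(E CheckL, p, no_outcome V)])"
    using Suc.prems by (rule prover_tracks_snoc) (simp add: c verifier_step_simps x1)
  then have "eventually_accepts w \<nu> CheckL p (regs4 x0 (real (K * Q)) x2 x3) (h @ [(E CheckL, p, no_outcome V)])"
    by (rule Suc.IH)
  then show ?case
    by (intro eventually_acceptsI)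
      (simp_all add: expected_next_CheckL_continue[of honest_prover w h, OF c] x1 eventually_accepts_succ_value)
qed

lemma eventually_accepts_CheckR:
  "prover_tracks w CheckR p (regs4 (real (K * Q0)) (real (K * Q1)) x2 x3) h \<Longrightarrow>
   eventually_accepts w \<nu> CheckR p (regs4 (real (K * Q0)) (real (K * Q1)) x2 x3) h"
proof (induction Q0 arbitrary: h)
  case 0
  have c: "honest_prover w h = 0"
    using honest_prover_tracks[OF 0] by (simp add: honest_answer_def valid_vstate_def affine_pair_def)
  have "prover_tracks w CheckL p (regs4 0 (real (K * Q1)) x2 x3) (h @ [(E CheckL, p, weigh_outcome V 0 0)])"
    using 0 by (rule prover_tracks_snoc) (simp add: c verifier_step_simps)
  then have "\<forall>\<^sub>F n in sequentially. \<nu> \<le>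
      succ_value (acc_within V honest_prover w n) CheckL p (regs4 0 (real (K * Q1)) x2 x3) h (weigh_outcome V 0 0)"
    by (intro eventually_accepts_succ_value eventually_accepts_CheckL)
  then show ?case
    by (intro eventually_acceptsI)
      (simp_all add: expected_next_CheckR_stop[of honest_prover w h, OF c] weigh_prob_unit_interval
        succ_value_acc_within_Reject)
next
  case (Suc Q)
  have "0 < real K" "0 \<le> real K * real Q" using K_pos by simp_all
  then have "real K + real K * real Q \<noteq> 0" by linarith
  then have c: "honest_prover w h \<noteq> 0"
    using honest_prover_tracks[OF Suc.prems] by (simp add: honest_answer_def valid_vstate_def affine_pair_def)
  have x0: "real (K * Suc Q) - real K = real (K * Q)" by (simp add: algebra_simps)
  have "prover_tracks w CheckR p (regs4 (real (K * Q)) (real (K * Q1)) x2 x3) (h @ [(E CheckR, p, no_outcome V)])"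
    using Suc.prems by (rule prover_tracks_snoc) (simp add: c verifier_step_simps x0)
  then have "eventually_accepts w \<nu> CheckR p (regs4 (real (K * Q)) (real (K * Q1)) x2 x3)
      (h @ [(E CheckR, p, no_outcome V)])"
    by (rule Suc.IH)
  then show ?case
    by (intro eventually_acceptsI)
      (simp_all add: expected_next_CheckR_continue[of honest_prover w h, OF c] x0 eventually_accepts_succ_value)
qed

lemma eventually_accepts_Sim_acc:
  assumes "prover_tracks w (Sim (tm_acc M)) p (regs4 x0 x1 x2 \<alpha>) h"
  shows "eventually_accepts w ((1 - \<alpha>) * \<nu> + \<alpha>) (Sim (tm_acc M)) p (regs4 x0 x1 x2 \<alpha>) h"
proof -
  define c where "c = honest_prover w h"
  let ?R = "regs4 (x0 - real (c mod K)) (x1 - real (c div K mod K)) x2 0"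
  have "prover_tracks w ToEnd p ?R (h @ [(E ToEnd, p, weigh_outcome V 3 0)])"
    using assms by (rule prover_tracks_snoc) (simp add: c_def verifier_step_simps tm_acc_less)
  then have ev: "\<forall>\<^sub>F n in sequentially. \<nu> \<le> succ_value (acc_within V honest_prover w n) ToEnd p ?R h (weigh_outcome V 3 0)"
    by (intro eventually_accepts_succ_value restart)
  have wp: "weigh_prob \<alpha> 0 = 1 - \<alpha>" "weigh_prob \<alpha> 1 = \<alpha>" "0 \<le> 1 - \<alpha>"
    using weigh_prob_unit_interval[of \<alpha>] eps_pos eps_less by auto
  have "\<forall>\<^sub>F n in sequentially. (1 - \<alpha>) * \<nu> + \<alpha> \<le>
      expected_next V honest_prover w (acc_within V honest_prover w n) (E (Sim (tm_acc M))) p (regs4 x0 x1 x2 \<alpha>) h"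
    unfolding expected_next_Sim_acc[of honest_prover w h c, OF c_def[symmetric]] wp(1,2) succ_value_acc_within_Accept
    using ev by (rule eventually_mono) (use wp(3) in \<open>simp add: mult_left_mono\<close>)
  then show ?thesis by (intro eventually_acceptsI) simp_all
qed

context
  fixes T :: nat
  assumes accept_T: "fst (tm_run M w T) = tm_acc M"
    and before_T: "\<And>t. t < T \<Longrightarrow> fst (tm_run M w t) \<noteq> tm_acc M"
begin

lemma tm_run_before_T:
  assumes "t < T" "tm_run M w t = (q, hp, tp)"
  shows "q \<noteq> tm_acc M" "q \<noteq> tm_rej M" "q < N"
proof -
  show "q \<noteq> tm_acc M" using before_T[OF assms(1)] assms(2) by simp
  show "q \<noteq> tm_rej M"
  proof
    assume "q = tm_rej M"
    then have "fst (tm_run M w T) = tm_rej M" using tm_run_rejected[of M w t T] assms by simp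
    then show False using accept_T wf by (simp add: wf_tm_def)
  qed
  show "q < N" using tm_run_ok[OF wf, of w t] assms(2) by (simp add: tm_config_ok_def)
qed

lemma eventually_accepts_Step:
  assumes "t < T" and run: "tm_run M w t = (q, hp, tp)"
    and tr: "prover_tracks w (Step q (tp hp) (tp (hp - 1))) p
      (regs4 (enc_right K tp hp - tp hp) (enc_left K tp hp - tp (hp - 1)) 0 \<alpha>) h"
    and next_sim: "\<And>q' hp' tp' h'. tm_run M w (Suc t) = (q', hp', tp') \<Longrightarrow>
      prover_tracks w (Sim q') p (regs4 (enc_right K tp' hp') (enc_left K tp' hp') (1/2) \<alpha>) h' \<Longrightarrow>
      eventually_accepts w \<nu>' (Sim q') p (regs4 (enc_right K tp' hp') (enc_left K tp' hp') (1/2) \<alpha>) h'"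
  shows "eventually_accepts w \<nu>' (Step q (tp hp) (tp (hp - 1))) p
    (regs4 (enc_right K tp hp - tp hp) (enc_left K tp hp - tp (hp - 1)) 0 \<alpha>) h"
proof -
  note q = tm_run_before_T[OF assms(1,2)]
  obtain q' s d where delta: "tm_delta M q (tp hp) = (q', s, d)" by (cases "tm_delta M q (tp hp)") auto
  note step = tm_run_step[OF wf run q(1,2) delta]
  have fs: "finite_support tp" using tm_run_ok[OF wf, of w t] run by (simp add: tm_config_ok_def)
  note enc = enc_write_move[OF fs K_pos step(2), of s hp]
  have cells: "tp hp < K" "tp (hp - 1) < K" using tm_run_cell_less[OF run] by auto
  let ?S = "regs4 (enc_right K (tp(hp := s)) (hp + d)) (enc_left K (tp(hp := s)) (hp + d)) (1/2) \<alpha>"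
  have "prover_tracks w (Sim q') p ?S (h @ [(E (Sim q'), p, no_outcome V)])"
    using tr by (rule prover_tracks_snoc) (use q(3) cells step(1,2) delta enc in \<open>simp add: verifier_step_simps\<close>)
  with step(3) have "eventually_accepts w \<nu>' (Sim q') p ?S (h @ [(E (Sim q'), p, no_outcome V)])"
    by (rule next_sim)
  then have "\<forall>\<^sub>F n in sequentially. \<nu>' \<le> succ_value (acc_within V honest_prover w n) (Sim q') p ?S h (no_outcome V)"
    by (rule eventually_accepts_succ_value)
  moreover have ok: "q' < N \<and> d \<in> {-1, 0, 1}" using step(1,2) by simp
  have "expected_next V honest_prover w F (E (Step q (tp hp) (tp (hp - 1)))) p
      (regs4 (enc_right K tp hp - tp hp) (enc_left K tp hp - tp (hp - 1)) 0 \<alpha>) h =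
      succ_value F (Sim q') p ?S h (no_outcome V)" for F
    unfolding expected_next_Step[OF q(3) cells delta] if_P[OF ok] enc ..
  ultimately show ?thesis by (intro eventually_acceptsI) simp_all
qed

lemma eventually_accepts_Sim_running:
  assumes "t < T" and run: "tm_run M w t = (q, hp, tp)"
    and tr: "prover_tracks w (Sim q) p (regs4 (enc_right K tp hp) (enc_left K tp hp) (1/2) \<alpha>) h"
    and next_sim: "\<And>q' hp' tp' h'. tm_run M w (Suc t) = (q', hp', tp') \<Longrightarrow>
      prover_tracks w (Sim q') p (regs4 (enc_right K tp' hp') (enc_left K tp' hp') (1/2) \<alpha>) h' \<Longrightarrow>
      eventually_accepts w \<nu>' (Sim q') p (regs4 (enc_right K tp' hp') (enc_left K tp' hp') (1/2) \<alpha>) h'"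
  shows "eventually_accepts w (1/2 * \<nu>' + 1/2 * \<nu>) (Sim q) p
    (regs4 (enc_right K tp hp) (enc_left K tp hp) (1/2) \<alpha>) h"
proof -
  note q = tm_run_before_T[OF assms(1) run]
  have cells: "tp hp < K" "tp (hp - 1) < K" using tm_run_cell_less[OF run] by auto
  have "honest_prover w h = tp hp + K * tp (hp - 1)"
    using honest_prover_tracks[OF tr] honest_answer_Sim[OF run] q(3) by (simp add: valid_vstate_def)
  then have claim: "honest_prover w h mod K = tp hp" "honest_prover w h div K mod K = tp (hp - 1)"
    using cells by simp_all
  have fs: "finite_support tp" using tm_run_ok[OF wf, of w t] run by (simp add: tm_config_ok_def)
  obtain Q0 :: nat where "enc_right K tp hp = tp hp + K * Q0" using enc_right_digit[OF fs] .
  obtain Q1 :: nat where "enc_left K tp hp = tp (hp - 1) + K * Q1" using enc_left_digit[OF fs] .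
  then have Q: "enc_right K tp hp - tp hp = real (K * Q0)" "enc_left K tp hp - tp (hp - 1) = real (K * Q1)"
    using \<open>enc_right K tp hp = tp hp + K * Q0\<close> by simp_all
  let ?X = "Step q (tp hp) (tp (hp - 1))"
  let ?Rs = "regs4 (enc_right K tp hp - tp hp) (enc_left K tp hp - tp (hp - 1)) 0 \<alpha>"
  let ?Rc = "regs4 (real (K * Q0)) (real (K * Q1)) 1 \<alpha>"
  have "prover_tracks w ?X p ?Rs (h @ [(E ?X, p, weigh_outcome V 2 0)])"
    using tr by (rule prover_tracks_snoc) (use q claim in \<open>simp add: verifier_step_simps\<close>)
  then have "eventually_accepts w \<nu>' ?X p ?Rs (h @ [(E ?X, p, weigh_outcome V 2 0)])"
    by (rule eventually_accepts_Step[OF assms(1) run _ next_sim])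
  then have step: "\<forall>\<^sub>F n in sequentially. \<nu>' \<le> succ_value (acc_within V honest_prover w n) ?X p ?Rs h (weigh_outcome V 2 0)"
    by (rule eventually_accepts_succ_value)
  have "prover_tracks w CheckR p ?Rc (h @ [(E CheckR, p, weigh_outcome V 2 1)])"
    using tr by (rule prover_tracks_snoc) (use q claim Q in \<open>simp add: verifier_step_simps\<close>)
  then have check: "\<forall>\<^sub>F n in sequentially. \<nu> \<le> succ_value (acc_within V honest_prover w n) CheckR p ?Rc h (weigh_outcome V 2 1)"
    by (intro eventually_accepts_succ_value eventually_accepts_CheckR)
  have half: "weigh_prob (1/2) 0 = 1/2" "weigh_prob (1/2) 1 = 1/2" using weigh_prob_unit_interval[of "1/2"] by simp_all
  have "\<forall>\<^sub>F n in sequentially. 1/2 * \<nu>' + 1/2 * \<nu> \<le>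
      expected_next V honest_prover w (acc_within V honest_prover w n) (E (Sim q)) p
        (regs4 (enc_right K tp hp) (enc_left K tp hp) (1/2) \<alpha>) h"
    unfolding expected_next_Sim[OF q(3,1,2) refl] claim half
    using eventually_conj[OF step check[folded Q]]
    by (rule eventually_mono) (elim conjE, rule add_mono; rule mult_left_mono; simp)
  then show ?thesis by (intro eventually_acceptsI) simp_all
qed

lemma eventually_accepts_Sim:
  "j \<le> T \<Longrightarrow> tm_run M w (T - j) = (q, hp, tp) \<Longrightarrow>
   prover_tracks w (Sim q) p (regs4 (enc_right K tp hp) (enc_left K tp hp) (1/2) \<alpha>) h \<Longrightarrow>
   eventually_accepts w ((1/2)^j * \<alpha> + (1 - (1/2)^j * \<alpha>) * \<nu>) (Sim q) p
     (regs4 (enc_right K tp hp) (enc_left K tp hp) (1/2) \<alpha>) h"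
proof (induction j arbitrary: q hp tp h)
  case 0
  then have "q = tm_acc M" using accept_T by simp
  with 0 show ?case using eventually_accepts_Sim_acc by (simp add: algebra_simps)
next
  case (Suc j)
  have t: "T - Suc j < T" "Suc (T - Suc j) = T - j" using Suc.prems(1) by auto
  have "eventually_accepts w (1/2 * ((1/2)^j * \<alpha> + (1 - (1/2)^j * \<alpha>) * \<nu>) + 1/2 * \<nu>) (Sim q) p
      (regs4 (enc_right K tp hp) (enc_left K tp hp) (1/2) \<alpha>) h"
    using t(1) Suc.prems(2,3)
  proof (rule eventually_accepts_Sim_running)
    fix q' hp' tp' h'
    assume "tm_run M w (Suc (T - Suc j)) = (q', hp', tp')"
      "prover_tracks w (Sim q') p (regs4 (enc_right K tp' hp') (enc_left K tp' hp') (1/2) \<alpha>) h'"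
    then show "eventually_accepts w ((1/2)^j * \<alpha> + (1 - (1/2)^j * \<alpha>) * \<nu>) (Sim q') p
        (regs4 (enc_right K tp' hp') (enc_left K tp' hp') (1/2) \<alpha>) h'"
      using Suc.IH Suc.prems(1) t(2) by simp
  qed
  then show ?case by (simp add: algebra_simps)
qed

lemma eventually_accepts_Load:
  "prover_tracks w Load p (regs4 (enc_right K (input_tape M w) (int p)) 0 (1/2) \<alpha>) h \<Longrightarrow>
   eventually_accepts w ((1/2)^T * \<alpha> + (1 - (1/2)^T * \<alpha>) * \<nu>) Load p
     (regs4 (enc_right K (input_tape M w) (int p)) 0 (1/2) \<alpha>) h"
proof (induction p arbitrary: h)
  case 0
  let ?R = "regs4 (enc_right K (input_tape M w) 0) 0 (1/2) \<alpha>"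
  have "tape w 0 = LEnd" by (simp add: tape_def)
  have "prover_tracks w (Sim (tm_start M)) 0 ?R (h @ [(E (Sim (tm_start M)), 0, no_outcome V)])"
    using 0 by (rule prover_tracks_snoc) (simp add: \<open>tape w 0 = LEnd\<close> verifier_step_simps tm_start_less)
  moreover have run0: "tm_run M w (T - T) = (tm_start M, 0, input_tape M w)" using tm_run_0 by simp
  ultimately have "eventually_accepts w ((1/2)^T * \<alpha> + (1 - (1/2)^T * \<alpha>) * \<nu>) (Sim (tm_start M)) 0 ?R
      (h @ [(E (Sim (tm_start M)), 0, no_outcome V)])"
    using eventually_accepts_Sim[OF order.refl run0] unfolding enc_left_input_tape_start by blast
  then show ?case
    by (intro eventually_acceptsI)
      (simp_all add: expected_next_Load \<open>tape w 0 = LEnd\<close> eventually_accepts_succ_value)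
next
  case (Suc p)
  let ?R = "\<lambda>p. regs4 (enc_right K (input_tape M w) (int p)) 0 (1/2) \<alpha>"
  have "prover_tracks w Load p (?R p) (h @ [(E Load, p, no_outcome V)])"
    using Suc.prems by (rule prover_tracks_snoc) (rule expected_next_Load_input)
  then have "\<forall>\<^sub>F n in sequentially. (1/2)^T * \<alpha> + (1 - (1/2)^T * \<alpha>) * \<nu> \<le>
      succ_value (acc_within V honest_prover w n) Load p (?R p) h (no_outcome V)"
    by (intro eventually_accepts_succ_value Suc.IH)
  then show ?case by (intro eventually_acceptsI) (simp_all only: expected_next_Load_input vstate.distinct not_False_eq_True)
qed

lemma eventually_accepts_ToEnd:
  "prover_tracks w ToEnd p (regs4 x0 x1 x2 x3) h \<Longrightarrow>
   eventually_accepts w ((1/2)^T * \<alpha> + (1 - (1/2)^T * \<alpha>) * \<nu>) ToEnd p (regs4 x0 x1 x2 x3) h"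
proof (induction "Suc (length w) - p" arbitrary: p x0 x1 x2 x3 h)
  case 0
  then have "tape w p = REnd" "length w \<le> p - 1" by (simp_all add: tape_REnd_iff)
  then have zero: "enc_right K (input_tape M w) (int (p - 1)) = 0" by (simp add: enc_right_input_tape_beyond)
  have "prover_tracks w Load (p - 1) (regs4 0 0 (1/2) \<alpha>) (h @ [(E Load, p - 1, no_outcome V)])"
    using 0(2) by (rule prover_tracks_snoc) (simp add: verifier_step_simps)
  then show ?case
    using eventually_accepts_Load[of "p - 1"] unfolding zero
    by (intro eventually_acceptsI) (simp_all add: expected_next_ToEnd \<open>tape w p = REnd\<close> eventually_accepts_succ_value)
next
  case (Suc k)
  then have "tape w p \<noteq> REnd" by (simp add: tape_REnd_iff)
  have "prover_tracks w ToEnd (Suc p) (regs4 0 0 (1/2) \<alpha>) (h @ [(E ToEnd, Suc p, no_outcome V)])"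
    using Suc.prems by (rule prover_tracks_snoc) (simp add: verifier_step_simps)
  then have "eventually_accepts w ((1/2)^T * \<alpha> + (1 - (1/2)^T * \<alpha>) * \<nu>) ToEnd (Suc p) (regs4 0 0 (1/2) \<alpha>)
      (h @ [(E ToEnd, Suc p, no_outcome V)])"
    using Suc.hyps(2) by (intro Suc.hyps(1)) simp_all
  then show ?case
    by (intro eventually_acceptsI) (simp_all add: expected_next_ToEnd \<open>tape w p \<noteq> REnd\<close> eventually_accepts_succ_value)
qed

end

end

lemma eventually_accepts_rounds:
  assumes "fst (tm_run M w T) = tm_acc M" "\<And>t. t < T \<Longrightarrow> fst (tm_run M w t) \<noteq> tm_acc M"
  shows "prover_tracks w ToEnd p (regs4 x0 x1 x2 x3) h \<Longrightarrow>
    eventually_accepts w (1 - (1 - (1/2)^T * \<alpha>) ^ m) ToEnd p (regs4 x0 x1 x2 x3) h"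
proof (induction m arbitrary: p x0 x1 x2 x3 h)
  case 0
  then show ?case by (simp add: eventually_accepts_def acc_within_nonneg)
next
  case (Suc m)
  have "(1/2)^T * \<alpha> + (1 - (1/2)^T * \<alpha>) * (1 - (1 - (1/2)^T * \<alpha>) ^ m) = 1 - (1 - (1/2)^T * \<alpha>) ^ Suc m"
    by (simp add: algebra_simps)
  then show ?case using eventually_accepts_ToEnd[OF Suc.IH assms Suc.prems] by simp
qed

lemma accept_prob_honest:
  assumes "tm_accepts M w"
  shows "accept_prob V honest_prover w = 1"
proof -
  define T where "T = (LEAST t. fst (tm_run M w t) = tm_acc M)"
  have ex: "\<exists>t. fst (tm_run M w t) = tm_acc M" using assms by (simp add: tm_accepts_iff_run)
  have accept_T: "fst (tm_run M w T) = tm_acc M" unfolding T_def using ex by (rule LeastI_ex)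
  have before_T: "fst (tm_run M w t) \<noteq> tm_acc M" if "t < T" for t
    using that not_less_Least unfolding T_def by blast
  have "prover_tracks w ToEnd 0 (regs4 0 0 0 0) []" by (simp add: prover_tracks_def flip: verifier_initial)
  then have "\<forall>\<^sub>F n in sequentially.
      1 - (1 - (1/2)^T * \<alpha>) ^ m \<le> acc_within V honest_prover w n (start V) 0 (init_regs V) []" for m
    using eventually_accepts_rounds[OF accept_T before_T] unfolding verifier_initial eventually_accepts_def by blast
  moreover have "acc_within V honest_prover w n (start V) 0 (init_regs V) [] \<le> 1" for n
    unfolding verifier_initial by (rule acc_within_le_one) (simp add: valid_vstate_def)
  moreover have "1 - (1/2)^T * \<alpha> < 1" using eps_pos by simp
  ultimately show ?thesis unfolding accept_prob_def by (intro SUP_eq_1_if_eventually_close)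
qed

end

theorem theorem4:
  fixes L :: "'a::finite list set" and eps :: rat
  assumes "turing_recognizable L" and "0 < eps" and "eps < 1/2"
  shows "\<exists>V :: 'a adfa. wf_adfa V \<and> rational_valued V \<and>
           weakly_verifies V L (of_rat eps) \<and> perfect_completeness V L"
proof -
  obtain M :: "'a tm" where wf: "wf_tm M" and L: "\<And>w. w \<in> L \<longleftrightarrow> tm_accepts M w"
    using assms(1) unfolding turing_recognizable_def by blast
  have "0 < (of_rat eps :: real)" "(of_rat eps :: real) < 1/2"
    using assms(2,3) of_rat_less[of 0 eps] of_rat_less[of eps "1/2"] by (simp_all add: of_rat_divide)
  with wf interpret verifier_setting M "of_rat eps" by unfold_locales
  have complete: "accept_prob V honest_prover w = 1" if "w \<in> L" for w
    using that L accept_prob_honest by blast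
  have sound: "accept_prob V P w \<le> of_rat eps" if "w \<notin> L" for w P
    using that L accept_prob_le_eps by blast
  show ?thesis
  proof (intro exI conjI)
    show "wf_adfa V" using wf by (rule wf_verifier)
    show "rational_valued V" by (rule rational_verifier) simp
    show "weakly_verifies V L (of_rat eps)"
      unfolding weakly_verifies_def using complete sound valid_honest_prover eps_pos by auto
    show "perfect_completeness V L"
      unfolding perfect_completeness_def using complete valid_honest_prover by blast
  qed
qed

end
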